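(* For $\mathbf F\in\mathcal M^n$ and $\mathbf G\in\overline{\mathcal A_n(\mathbf F)}$, we have $\mathcal D_n(\mathbf F)\subset\mathcal D_n(\mathbf G)$.
   Context: Work on an atomless probability space. $\mathcal M$ is the set of cdfs on $\mathbb{R}$. $\mathcal D_n(\mathbf F)=\{\text{cdf of }X_1+\dots+X_n:X_i\sim F_i\}$. $\mathcal Q_n$ is the set of $n\times n$ doubly stochastic matrices; $\Lambda\mathbf F$ has $i$-th component $\sum_j\Lambda_{ij}F_j$. For $x\in\mathbb{R}$, $T_x(F)$ is the distribution of $X+x$ with $X\sim F$, and for $\mathbf x\in\mathbb{R}^n$, $\mathbf T_{\mathbf x}(\mathbf F)=(T_{x_1}(F_1),\dots,T_{x_n}(F_n))$. Define $\mathcal A_n(\mathbf F)=\{\Lambda\mathbf T_{\mathbf x}(\mathbf F):\Lambda\in\mathcal Q_n,\ \mathbf x\in\mathbb{R}^n,\ x_1+\dots+x_n=0\}$, and let $\overline{\mathcal A_n(\mathbf F)}$ be the closure, with respect to (componentwise) weak convergence, of the convex hull of $\mathcal A_n(\mathbf F)$, where convex combinations of tuples are taken componentwise as mixtures of cdfs. *)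

theory Defs
  imports "HOL-Probability.Probability"
begin

text \<open>n-tuples of cdfs are represented as functions of type nat => real => real;
  only the components with index i < n are relevant.\<close>

definition is_cdf :: "(real \<Rightarrow> real) \<Rightarrow> bool" where
  "is_cdf F \<longleftrightarrow> right_continuous_mono F 0 1"

definition atomless :: "'a measure \<Rightarrow> bool" where
  "atomless M \<longleftrightarrow> (\<forall>A \<in> sets M. 0 < measure M A \<longrightarrow>
      (\<exists>B \<in> sets M. B \<subseteq> A \<and> 0 < measure M B \<and> measure M B < measure M A))"

definition rv_cdf :: "'a measure \<Rightarrow> ('a \<Rightarrow> real) \<Rightarrow> real \<Rightarrow> real" where
  "rv_cdf M X = (\<lambda>t. measure M {\<omega> \<in> space M. X \<omega> \<le> t})"

definition D_set :: "'a measure \<Rightarrow> nat \<Rightarrow> (nat \<Rightarrow> real \<Rightarrow> real) \<Rightarrow> (real \<Rightarrow> real) set" where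
  "D_set M n F = {H. \<exists>X :: nat \<Rightarrow> 'a \<Rightarrow> real.
      (\<forall>i<n. X i \<in> borel_measurable M \<and> rv_cdf M (X i) = F i) \<and>
      H = rv_cdf M (\<lambda>\<omega>. \<Sum>i<n. X i \<omega>)}"

definition doubly_stochastic :: "nat \<Rightarrow> (nat \<Rightarrow> nat \<Rightarrow> real) \<Rightarrow> bool" where
  "doubly_stochastic n L \<longleftrightarrow> (\<forall>i<n. \<forall>j<n. 0 \<le> L i j) \<and>
      (\<forall>i<n. (\<Sum>j<n. L i j) = 1) \<and> (\<forall>j<n. (\<Sum>i<n. L i j) = 1)"

definition shift_cdf :: "real \<Rightarrow> (real \<Rightarrow> real) \<Rightarrow> real \<Rightarrow> real" where
  "shift_cdf x F = (\<lambda>t. F (t - x))"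

definition in_A :: "nat \<Rightarrow> (nat \<Rightarrow> real \<Rightarrow> real) \<Rightarrow> (nat \<Rightarrow> real \<Rightarrow> real) \<Rightarrow> bool" where
  "in_A n F G \<longleftrightarrow> (\<exists>L x. doubly_stochastic n L \<and> (\<Sum>i<n. x i) = 0 \<and>
      (\<forall>i<n. G i = (\<lambda>t. \<Sum>j<n. L i j * shift_cdf (x j) (F j) t)))"

definition in_conv_A :: "nat \<Rightarrow> (nat \<Rightarrow> real \<Rightarrow> real) \<Rightarrow> (nat \<Rightarrow> real \<Rightarrow> real) \<Rightarrow> bool" where
  "in_conv_A n F G \<longleftrightarrow> (\<exists>(m::nat) (w::nat \<Rightarrow> real) (H::nat \<Rightarrow> nat \<Rightarrow> real \<Rightarrow> real).
      (\<forall>k<m. 0 \<le> w k \<and> in_A n F (H k)) \<and> (\<Sum>k<m. w k) = 1 \<and>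
      (\<forall>i<n. G i = (\<lambda>t. \<Sum>k<m. w k * H k i t)))"

text \<open>The weak topology on cdfs is metrizable (Levy metric),
  so the closure is the sequential closure.\<close>
definition in_closure_A :: "nat \<Rightarrow> (nat \<Rightarrow> real \<Rightarrow> real) \<Rightarrow> (nat \<Rightarrow> real \<Rightarrow> real) \<Rightarrow> bool" where
  "in_closure_A n F G \<longleftrightarrow> (\<forall>i<n. is_cdf (G i)) \<and>
      (\<exists>S :: nat \<Rightarrow> nat \<Rightarrow> real \<Rightarrow> real. (\<forall>k. in_conv_A n F (S k)) \<and>
         (\<forall>i<n. weak_conv (\<lambda>k. S k i) (G i)))"

end

theory Submission
  imports Defs "HOL-Library.Diagonal_Subsequence"
begin

(* By the Birkhoff-von Neumann theorem every element of the convex hull of A_n(F) is a finite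
   mixture, with weights w j, of tuples (F (p j i) (t - c j i))_i with permutations p j and shift
   vectors c j summing to 0. If X_i ~ F_i and j is drawn independently of X with probability w j,
   the variables X (p j i) + c j i have these mixtures as cdfs and the same sum as the X_i.
   To pass to a weak limit G of such mixtures, only the dyadic cell of (X, p j, c j) at resolution
   2^-L inside the window [-L, L) is recorded at level L. Along a diagonal subsequence the finitely
   many cell probabilities converge, tightness of G makes the mass outside the window vanish, and
   the limits form a projective family. As M is atomless, this family is realised by nested
   partitions of M; the increasing dyadic values of the realised cells converge to variables Y_i
   with cdf G_i whose sum has the distribution of the sum of the X_i. *)

section \<open>Hall's marriage theorem and the Birkhoff--von Neumann theorem\<close>

lemma Hall_condition_remove_point:
  fixes A :: "'i \<Rightarrow> 'j set"
  assumes fin: "finite I" "\<And>i. i \<in> I \<Longrightarrow> finite (A i)" and i: "i \<in> I"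
    and surplus: "\<And>S. S \<subseteq> I \<Longrightarrow> S \<noteq> {} \<Longrightarrow> S \<noteq> I \<Longrightarrow> card S < card (\<Union>(A ` S))"
    and T: "T \<subseteq> I - {i}"
  shows "card T \<le> card (\<Union>k\<in>T. A k - {j})"
proof (cases "T = {}")
  case False
  have lt: "card T < card (\<Union>(A ` T))" using surplus[OF _ False] T i by auto
  have "finite T" using T by (intro rev_finite_subset[OF fin(1)]) auto
  then have "finite (\<Union>(A ` T))" using T fin(2) by auto
  then have "card (\<Union>(A ` T)) - 1 \<le> card (\<Union>(A ` T) - {j})"
    by (metis card_Diff_singleton_if diff_le_self order_refl)
  moreover have "(\<Union>k\<in>T. A k - {j}) = \<Union>(A ` T) - {j}" by auto
  ultimately show ?thesis using lt by simp
qed simp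

lemma Hall_condition_remove_critical:
  fixes A :: "'i \<Rightarrow> 'j set"
  assumes fin: "finite I" "\<And>i. i \<in> I \<Longrightarrow> finite (A i)"
    and hall: "\<And>S. S \<subseteq> I \<Longrightarrow> card S \<le> card (\<Union>(A ` S))"
    and S: "S \<subseteq> I" "card (\<Union>(A ` S)) \<le> card S" and T: "T \<subseteq> I - S"
  shows "card T \<le> card (\<Union>k\<in>T. A k - \<Union>(A ` S))"
proof -
  let ?N = "\<Union>(A ` S)"
  have finT: "finite T" and finS: "finite S" using T S fin finite_subset by blast+
  have finN: "finite ?N" using finS fin S by auto
  have "card (T \<union> S) \<le> card (\<Union>(A ` (T \<union> S)))" using T S by (intro hall) auto
  also have "\<Union>(A ` (T \<union> S)) = (\<Union>k\<in>T. A k - ?N) \<union> ?N" by auto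
  also have "card ((\<Union>k\<in>T. A k - ?N) \<union> ?N) = card (\<Union>k\<in>T. A k - ?N) + card ?N"
    using finT fin T finN by (intro card_Un_disjoint) auto
  moreover have "T \<inter> S = {}" using T by auto
  ultimately show ?thesis using card_Un_disjoint[OF finT finS] S(2) by auto
qed

theorem Hall_marriage:
  fixes A :: "'i \<Rightarrow> 'j set"
  assumes "finite I" and "\<And>i. i \<in> I \<Longrightarrow> finite (A i)"
    and "\<And>S. S \<subseteq> I \<Longrightarrow> card S \<le> card (\<Union>(A ` S))"
  shows "\<exists>f. inj_on f I \<and> (\<forall>i\<in>I. f i \<in> A i)"
  using assms
proof (induction "card I" arbitrary: I A rule: less_induct)
  case less
  note fin = less.prems(1,2) and hall = less.prems(3)
  consider (empty) "I = {}"
    | (critical) S where "S \<subseteq> I" "S \<noteq> {}" "S \<noteq> I" "card (\<Union>(A ` S)) \<le> card S"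
    | (surplus) "I \<noteq> {}" "\<And>S. S \<subseteq> I \<Longrightarrow> S \<noteq> {} \<Longrightarrow> S \<noteq> I \<Longrightarrow> card S < card (\<Union>(A ` S))"
    by (meson not_le)
  then show ?case
  proof cases
    case empty
    then show ?thesis by auto
  next
    case surplus
    then obtain i where i: "i \<in> I" by auto
    have "A i \<noteq> {}" using hall[of "{i}"] i by auto
    then obtain j where j: "j \<in> A i" by auto
    have "card (I - {i}) < card I" using card_Diff1_less[OF fin(1) i] .
    then obtain f where f: "inj_on f (I - {i})" "\<forall>k\<in>I - {i}. f k \<in> A k - {j}"
      using less.hyps[of "I - {i}" "\<lambda>k. A k - {j}"] fin i surplus(2)
        Hall_condition_remove_point[OF fin i surplus(2)] by auto
    then have "inj_on (f(i := j)) I" "\<forall>k\<in>I. (f(i := j)) k \<in> A k"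
      using j i unfolding inj_on_def by auto
    then show ?thesis by blast
  next
    case critical
    let ?N = "\<Union>(A ` S)"
    have "card S < card I" using critical fin by (meson psubsetI psubset_card_mono)
    moreover have "card (I - S) < card I"
      using critical fin by (intro psubset_card_mono) auto
    moreover have "finite S" using critical fin finite_subset by auto
    ultimately obtain g h where g: "inj_on g S" "\<forall>k\<in>S. g k \<in> A k"
      and h: "inj_on h (I - S)" "\<forall>k\<in>I - S. h k \<in> A k - ?N"
      using less.hyps[of S A] less.hyps[of "I - S" "\<lambda>k. A k - ?N"] critical fin hall
        Hall_condition_remove_critical[OF fin hall critical(1,4)] by (auto simp: subset_iff)
    define f where "f = (\<lambda>k. if k \<in> S then g k else h k)"
    have "g k \<in> ?N" if "k \<in> S" for k using g(2) that by blast
    moreover have "h k \<notin> ?N" if "k \<in> I - S" for k using h(2) that by blast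
    ultimately have "inj_on f I"
      using g(1) h(1) unfolding f_def inj_on_def by (metis DiffI)
    moreover have "\<forall>k\<in>I. f k \<in> A k" using g h unfolding f_def by auto
    ultimately show ?thesis by blast
  qed
qed

lemma positive_permutation_diagonal:
  fixes L :: "nat \<Rightarrow> nat \<Rightarrow> real"
  assumes nonneg: "\<And>i j. i < n \<Longrightarrow> j < n \<Longrightarrow> 0 \<le> L i j"
    and rows: "\<And>i. i < n \<Longrightarrow> (\<Sum>j<n. L i j) = s"
    and cols: "\<And>j. j < n \<Longrightarrow> (\<Sum>i<n. L i j) = s" and "0 < s"
  shows "\<exists>p. p permutes {..<n} \<and> (\<forall>i<n. 0 < L i (p i))"
proof -
  define A where "A = (\<lambda>i. {j. j < n \<and> 0 < L i j})"
  have "card S \<le> card (\<Union>(A ` S))" if S: "S \<subseteq> {..<n}" for S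
  proof -
    define N where "N = \<Union>(A ` S)"
    have N: "N \<subseteq> {..<n}" unfolding N_def A_def by auto
    have "real (card S) * s = (\<Sum>i\<in>S. s)" by simp
    also have "\<dots> = (\<Sum>i\<in>S. \<Sum>j<n. L i j)" using rows S by (intro sum.cong) auto
    also have "\<dots> = (\<Sum>i\<in>S. \<Sum>j\<in>N. L i j)"
    proof (rule sum.cong[OF refl], rule sum.mono_neutral_right)
      fix i assume "i \<in> S"
      then show "\<forall>j\<in>{..<n} - N. L i j = 0" using nonneg S unfolding N_def A_def by force
    qed (use N in auto)
    also have "\<dots> = (\<Sum>j\<in>N. \<Sum>i\<in>S. L i j)" by (rule sum.swap)
    also have "\<dots> \<le> (\<Sum>j\<in>N. \<Sum>i<n. L i j)"
      using S N nonneg by (intro sum_mono sum_mono2) auto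
    also have "\<dots> = (\<Sum>j\<in>N. s)" using cols N by (intro sum.cong) auto
    also have "\<dots> = real (card N) * s" by simp
    finally show ?thesis using \<open>0 < s\<close> unfolding N_def by simp
  qed
  then obtain f where f: "inj_on f {..<n}" "\<forall>i\<in>{..<n}. f i \<in> A i"
    using Hall_marriage[of "{..<n}" A] unfolding A_def by auto
  define p where "p = (\<lambda>i. if i < n then f i else i)"
  have "inj_on p {..<n}" using f(1) unfolding p_def inj_on_def by auto
  then have "p permutes {..<n}"
    using f(2) unfolding p_def A_def by (intro inj_imp_permutes) auto
  moreover have "\<forall>i<n. 0 < L i (p i)" using f(2) unfolding p_def A_def by auto
  ultimately show ?thesis by blast
qed

lemma subtract_permutation_matrix:
  fixes L :: "nat \<Rightarrow> nat \<Rightarrow> real"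
  assumes p: "p permutes {..<n}"
    and rows: "\<And>i. i < n \<Longrightarrow> (\<Sum>j<n. L i j) = s"
    and cols: "\<And>j. j < n \<Longrightarrow> (\<Sum>i<n. L i j) = s"
  shows "\<And>i. i < n \<Longrightarrow> (\<Sum>j<n. L i j - (if p i = j then t else 0)) = s - t"
    and "\<And>j. j < n \<Longrightarrow> (\<Sum>i<n. L i j - (if p i = j then t else 0)) = s - t"
proof -
  fix i assume "i < n"
  then show "(\<Sum>j<n. L i j - (if p i = j then t else 0)) = s - t"
    using rows permutes_in_image[OF p] by (simp add: sum_subtractf)
next
  fix j assume j: "j < n"
  have "(\<Sum>i<n. if p i = j then t else 0) = (\<Sum>i<n. if i = j then t else 0)"
    using sum.permute[OF p, of "\<lambda>i. if i = j then t else 0"] by (simp add: comp_def)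
  then show "(\<Sum>i<n. L i j - (if p i = j then t else 0)) = s - t"
    using cols j by (simp add: sum_subtractf)
qed

definition matrix_support :: "nat \<Rightarrow> (nat \<Rightarrow> nat \<Rightarrow> real) \<Rightarrow> (nat \<times> nat) set" where
  "matrix_support n L = {(i, j). i < n \<and> j < n \<and> L i j \<noteq> 0}"

text \<open>Subtracting t times the permutation matrix of p, where t is the least entry of L along p,
  keeps L nonnegative and kills at least one entry.\<close>

lemma Birkhoff_step:
  fixes L :: "nat \<Rightarrow> nat \<Rightarrow> real"
  assumes nonneg: "\<And>i j. i < n \<Longrightarrow> j < n \<Longrightarrow> 0 \<le> L i j"
    and rows: "\<And>i. i < n \<Longrightarrow> (\<Sum>j<n. L i j) = s"
    and cols: "\<And>j. j < n \<Longrightarrow> (\<Sum>i<n. L i j) = s" and "0 < s" and "n \<noteq> 0"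
  obtains p t where "p permutes {..<n}" "0 < t" "t \<le> s"
    "\<And>i j. i < n \<Longrightarrow> j < n \<Longrightarrow> 0 \<le> L i j - (if p i = j then t else 0)"
    "card (matrix_support n (\<lambda>i j. L i j - (if p i = j then t else 0))) < card (matrix_support n L)"
proof -
  obtain p where p: "p permutes {..<n}" "\<forall>i<n. 0 < L i (p i)"
    using positive_permutation_diagonal[OF nonneg rows cols \<open>0 < s\<close>] by blast
  have p_less: "p i < n" if "i < n" for i using permutes_in_image[OF p(1)] that by simp
  define t where "t = Min ((\<lambda>i. L i (p i)) ` {..<n})"
  have "t \<in> (\<lambda>i. L i (p i)) ` {..<n}" unfolding t_def using \<open>n \<noteq> 0\<close> by (intro Min_in) auto
  then obtain i0 where i0: "i0 < n" "t = L i0 (p i0)" by auto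
  have t_le: "t \<le> L i (p i)" if "i < n" for i using that unfolding t_def by simp
  have "t \<le> s"
    using i0 rows[OF i0(1)] member_le_sum[of "p i0" "{..<n}" "L i0"] nonneg p_less by auto
  define L' where "L' i j = L i j - (if p i = j then t else 0)" for i j
  have "matrix_support n L' \<subseteq> matrix_support n L"
    using p(2) unfolding L'_def matrix_support_def by auto
  moreover have "(i0, p i0) \<in> matrix_support n L - matrix_support n L'"
    using i0 p(2) p_less unfolding L'_def matrix_support_def by auto
  ultimately have "card (matrix_support n L') < card (matrix_support n L)"
    by (intro psubset_card_mono[OF finite_subset[of _ "{..<n} \<times> {..<n}"]])
      (auto simp: matrix_support_def)
  moreover have "0 \<le> L' i j" if "i < n" "j < n" for i j
    using nonneg[OF that] t_le[OF that(1)] unfolding L'_def by auto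
  ultimately show ?thesis using that[OF p(1) _ \<open>t \<le> s\<close>] p(2) i0 unfolding L'_def by auto
qed

theorem Birkhoff_von_Neumann_scaled:
  fixes L :: "nat \<Rightarrow> nat \<Rightarrow> real"
  assumes "\<And>i j. i < n \<Longrightarrow> j < n \<Longrightarrow> 0 \<le> L i j"
    and "\<And>i. i < n \<Longrightarrow> (\<Sum>j<n. L i j) = s" and "\<And>j. j < n \<Longrightarrow> (\<Sum>i<n. L i j) = s"
    and "0 \<le> s"
  shows "\<exists>\<beta>. (\<forall>p. 0 \<le> \<beta> p) \<and> (\<Sum>p\<in>{p. p permutes {..<n}}. \<beta> p) = s \<and>
    (\<forall>i<n. \<forall>j<n. L i j = (\<Sum>p\<in>{p. p permutes {..<n}}. if p i = j then \<beta> p else 0))"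
  using assms
proof (induction "card (matrix_support n L)" arbitrary: L s rule: less_induct)
  case less
  note nonneg = less.prems(1) and rows = less.prems(2) and cols = less.prems(3)
  let ?P = "{p. p permutes {..<n}}"
  consider "n = 0" | "s = 0" | "n \<noteq> 0" "0 < s" using less.prems(4) by fastforce
  then show ?case
  proof cases
    case 1
    then have "?P = {id}" by auto
    then show ?thesis using less.prems(4) 1 by (intro exI[of _ "\<lambda>p. s"]) auto
  next
    case 2
    then have "L i j = 0" if "i < n" "j < n" for i j
      using rows[OF that(1)] sum_nonneg_eq_0_iff[of "{..<n}" "L i"] nonneg that by auto
    then show ?thesis using 2 by (intro exI[of _ "\<lambda>p. 0"]) auto
  next
    case 3
    obtain p t where p: "p permutes {..<n}" and t: "0 < t" "t \<le> s"
      and step: "\<And>i j. i < n \<Longrightarrow> j < n \<Longrightarrow> 0 \<le> L i j - (if p i = j then t else 0)"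
        "card (matrix_support n (\<lambda>i j. L i j - (if p i = j then t else 0)))
          < card (matrix_support n L)"
      using Birkhoff_step[OF nonneg rows cols 3(2,1)] by blast
    have "\<exists>\<beta>'. (\<forall>p. 0 \<le> \<beta>' p) \<and> (\<Sum>p\<in>?P. \<beta>' p) = s - t \<and>
        (\<forall>i<n. \<forall>j<n. L i j - (if p i = j then t else 0) = (\<Sum>q\<in>?P. if q i = j then \<beta>' q else 0))"
      using subtract_permutation_matrix[OF p rows cols] t
        by (intro less.hyps[OF step(2) step(1)]) auto
    then obtain \<beta>' where \<beta>': "\<forall>p. 0 \<le> \<beta>' p" "(\<Sum>p\<in>?P. \<beta>' p) = s - t"
        "\<forall>i<n. \<forall>j<n. L i j - (if p i = j then t else 0) = (\<Sum>q\<in>?P. if q i = j then \<beta>' q else 0)"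
      by blast
    define \<beta> where "\<beta> q = \<beta>' q + (if q = p then t else 0)" for q
    have "finite ?P" by (simp add: finite_permutations)
    have "L i j = (\<Sum>q\<in>?P. if q i = j then \<beta> q else 0)" if "i < n" "j < n" for i j
    proof -
      have "(\<Sum>q\<in>?P. if q i = j then \<beta> q else 0) = (\<Sum>q\<in>?P.
          (if q i = j then \<beta>' q else 0) + (if q = p then (if p i = j then t else 0) else 0))"
        unfolding \<beta>_def by (rule sum.cong) auto
      also have "\<dots> = (L i j - (if p i = j then t else 0)) + (if p i = j then t else 0)"
        using p \<open>finite ?P\<close> \<beta>'(3) that by (simp add: sum.distrib)
      finally show ?thesis by simp
    qed
    moreover have "\<forall>q. 0 \<le> \<beta> q" "(\<Sum>q\<in>?P. \<beta> q) = s"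
      using \<beta>' p t \<open>finite ?P\<close> by (auto simp: \<beta>_def sum.distrib)
    ultimately show ?thesis by blast
  qed
qed

corollary doubly_stochastic_permutation_mixture:
  assumes "doubly_stochastic n L"
  obtains \<beta> where "\<And>p. 0 \<le> \<beta> p" "(\<Sum>p\<in>{p. p permutes {..<n}}. \<beta> p) = 1"
    "\<And>i g. i < n \<Longrightarrow> (\<Sum>j<n. L i j * g j) = (\<Sum>p\<in>{p. p permutes {..<n}}. \<beta> p * g (p i))"
proof -
  let ?P = "{p. p permutes {..<n}}"
  obtain \<beta> where \<beta>: "\<forall>p. 0 \<le> \<beta> p" "(\<Sum>p\<in>?P. \<beta> p) = 1"
      "\<forall>i<n. \<forall>j<n. L i j = (\<Sum>p\<in>?P. if p i = j then \<beta> p else 0)"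
    using Birkhoff_von_Neumann_scaled[of n L 1] assms unfolding doubly_stochastic_def by auto
  have "(\<Sum>j<n. L i j * g j) = (\<Sum>p\<in>?P. \<beta> p * g (p i))" if i: "i < n" for i g
  proof -
    have "(\<Sum>j<n. L i j * g j) = (\<Sum>j<n. \<Sum>p\<in>?P. if p i = j then \<beta> p * g j else 0)"
      using \<beta>(3) i by (auto simp: sum_distrib_right intro!: sum.cong)
    also have "\<dots> = (\<Sum>p\<in>?P. \<Sum>j<n. if p i = j then \<beta> p * g j else 0)" by (rule sum.swap)
    also have "\<dots> = (\<Sum>p\<in>?P. \<beta> p * g (p i))"
      using i by (intro sum.cong) (auto simp: sum.delta dest: permutes_in_image[where x = i])
    finally show ?thesis .
  qed
  then show ?thesis using that \<beta>(1,2) by blast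
qed

section \<open>Atomless probability spaces\<close>

lemma (in finite_measure) exists_half_maximal_measure:
  assumes "{} \<in> \<C>" and "\<C> \<subseteq> sets M"
  shows "\<exists>C\<in>\<C>. \<forall>C'\<in>\<C>. measure M C' \<le> 2 * measure M C"
proof -
  define s where "s = Sup (measure M ` \<C>)"
  have bdd: "bdd_above (measure M ` \<C>)"
    using assms(2) by (intro bdd_aboveI[of _ "measure M (space M)"]) (auto intro: bounded_measure)
  have le_s: "measure M C' \<le> s" if "C' \<in> \<C>" for C'
    unfolding s_def using bdd that by (intro cSup_upper) auto
  show ?thesis
  proof (cases "s \<le> 0")
    case True
    then show ?thesis using assms(1) by (intro bexI[of _ "{}"]) (auto dest: le_s)
  next
    case False
    then have "s / 2 < Sup (measure M ` \<C>)" unfolding s_def by simp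
    moreover have "\<C> \<noteq> {}" using assms(1) by auto
    ultimately obtain C where "C \<in> \<C>" "s / 2 < measure M C"
      using less_cSup_iff[OF _ bdd, of "s / 2"] by blast
    then show ?thesis using le_s by (intro bexI[of _ C]) force+
  qed
qed

definition partition_with_measures ::
    "'a measure \<Rightarrow> 'a set \<Rightarrow> 'b set \<Rightarrow> ('b \<Rightarrow> real) \<Rightarrow> ('b \<Rightarrow> 'a set) \<Rightarrow> bool" where
  "partition_with_measures M S K p B \<longleftrightarrow> (\<forall>b\<in>K. B b \<in> sets M \<and> measure M (B b) = p b) \<and>
     disjoint_family_on B K \<and> (\<Union>b\<in>K. B b) = S"

context finite_measure
begin

lemma atomless_small_subset:
  assumes al: "atomless M" and A: "A \<in> sets M" "0 < measure M A" and e: "0 < e"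
  shows "\<exists>B\<in>sets M. B \<subseteq> A \<and> 0 < measure M B \<and> measure M B < e"
proof -
  have "\<exists>B\<in>sets M. B \<subseteq> A \<and> 0 < measure M B \<and> measure M B \<le> measure M A / 2^k" for k
  proof (induction k)
    case 0
    then show ?case using A by auto
  next
    case (Suc k)
    then obtain B where B: "B \<in> sets M" "B \<subseteq> A" "0 < measure M B" "measure M B \<le> measure M A / 2^k"
      by auto
    obtain C where C: "C \<in> sets M" "C \<subseteq> B" "0 < measure M C" "measure M C < measure M B"
      using al B unfolding atomless_def by blast
    have "measure M (B - C) = measure M B - measure M C"
      using C B by (simp add: finite_measure_Diff)
    then show ?case
    proof (cases "measure M C \<le> measure M B / 2")
      case True
      then show ?thesis using B C by (intro bexI[of _ C]) auto
    next
      case False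
      then show ?thesis using B C \<open>measure M (B - C) = _\<close> by (intro bexI[of _ "B - C"]) auto
    qed
  qed
  moreover obtain k where "measure M A / e < 2 ^ k"
    using real_arch_pow[of 2 "measure M A / e"] by auto
  then have "measure M A / 2^k < e" using e by (simp add: field_simps)
  ultimately show ?thesis by (meson le_less_trans)
qed

lemma greedy_chain:
  assumes A: "A \<in> sets M" and "0 \<le> a"
  obtains D where "\<And>n. D n \<in> sets M" "\<And>n. D n \<subseteq> A" "\<And>n. measure M (D n) \<le> a" "incseq D"
    "\<And>n C. C \<in> sets M \<Longrightarrow> C \<subseteq> A - D n \<Longrightarrow> measure M (D n) + measure M C \<le> a \<Longrightarrow>
      measure M C \<le> 2 * (measure M (D (Suc n)) - measure M (D n))"
proof -
  define adm where "adm D = {C \<in> sets M. C \<subseteq> A - D \<and> measure M D + measure M C \<le> a}" for D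
  define P where "P (n::nat) D \<longleftrightarrow> D \<in> sets M \<and> D \<subseteq> A \<and> measure M D \<le> a" for n D
  define Q where "Q (n::nat) D D' \<longleftrightarrow> D \<subseteq> D' \<and>
    (\<forall>C\<in>adm D. measure M C \<le> 2 * (measure M D' - measure M D))" for n D D'
  have "\<exists>D'. P (Suc n) D' \<and> Q n D D'" if "P n D" for n D
  proof -
    have "{} \<in> adm D" "adm D \<subseteq> sets M" using that by (auto simp: adm_def P_def)
    then obtain C where C: "C \<in> adm D" "\<forall>C'\<in>adm D. measure M C' \<le> 2 * measure M C"
      using exists_half_maximal_measure by blast
    have "measure M (D \<union> C) = measure M D + measure M C"
      using C that unfolding adm_def P_def by (intro finite_measure_Union) auto
    then show ?thesis using C that unfolding P_def Q_def adm_def by (intro exI[of _ "D \<union> C"]) auto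
  qed
  moreover have "P 0 {}" unfolding P_def using assms by auto
  ultimately obtain D where D: "\<And>n. P n (D n)" "\<And>n. Q n (D n) (D (Suc n))"
    using dependent_nat_choice[of P Q] by metis
  moreover have "incseq D" using D(2) unfolding Q_def by (intro incseq_SucI) auto
  ultimately show ?thesis by (intro that[of D]) (auto simp: P_def Q_def adm_def)
qed

text \<open>Sierpinski's theorem: if the union of a greedy chain had measure below a, a small admissible
  set would survive every step, forcing increments that do not tend to 0.\<close>

lemma atomless_subset_with_measure:
  assumes al: "atomless M" and A: "A \<in> sets M" and a: "0 \<le> a" "a \<le> measure M A"
  shows "\<exists>B\<in>sets M. B \<subseteq> A \<and> measure M B = a"
proof -
  obtain D where D: "\<And>n. D n \<in> sets M" "\<And>n. D n \<subseteq> A" "\<And>n. measure M (D n) \<le> a" "incseq D"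
    and greedy: "\<And>n C. C \<in> sets M \<Longrightarrow> C \<subseteq> A - D n \<Longrightarrow> measure M (D n) + measure M C \<le> a \<Longrightarrow>
      measure M C \<le> 2 * (measure M (D (Suc n)) - measure M (D n))"
    using greedy_chain[OF A a(1)] by blast
  define B where "B = (\<Union>n. D n)"
  have lim: "(\<lambda>n. measure M (D n)) \<longlonglongrightarrow> measure M B"
    unfolding B_def using D(1,4) by (intro finite_Lim_measure_incseq) auto
  have B: "B \<in> sets M" "B \<subseteq> A" using D(1,2) unfolding B_def by auto
  have "measure M B \<le> a" using D(3) by (intro LIMSEQ_le_const2[OF lim]) auto
  moreover have "\<not> measure M B < a"
  proof
    assume "measure M B < a"
    moreover have "measure M (A - B) = measure M A - measure M B"
      using A B by (simp add: finite_measure_Diff)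
    ultimately obtain C where C: "C \<in> sets M" "C \<subseteq> A - B" "0 < measure M C"
        "measure M C < a - measure M B"
      using atomless_small_subset[OF al _ _, of "A - B" "a - measure M B"] A B a by auto
    have "measure M C \<le> 2 * (measure M (D (Suc n)) - measure M (D n))" for n
    proof (rule greedy)
      have "measure M (D n) \<le> measure M B"
        using B D(1) unfolding B_def by (intro finite_measure_mono) auto
      then show "measure M (D n) + measure M C \<le> a" using C(4) by linarith
    qed (use C in \<open>auto simp: B_def\<close>)
    moreover have "(\<lambda>n. 2 * (measure M (D (Suc n)) - measure M (D n)))
        \<longlonglongrightarrow> 2 * (measure M B - measure M B)"
      by (intro tendsto_mult tendsto_const tendsto_diff LIMSEQ_Suc lim)
    ultimately have "measure M C \<le> 0" by (intro LIMSEQ_le_const[of _ 0]) auto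
    then show False using C by simp
  qed
  ultimately show ?thesis using B by (intro bexI[of _ B]) auto
qed

lemma atomless_partition_with_measures:
  assumes al: "atomless M"
    and "finite K" "K \<noteq> {}" "A \<in> sets M" "\<And>b. b \<in> K \<Longrightarrow> 0 \<le> p b" "(\<Sum>b\<in>K. p b) = measure M A"
  shows "\<exists>B. partition_with_measures M A K p B"
  using assms(2-)
proof (induction K arbitrary: A rule: finite_ne_induct)
  case (singleton b)
  then show ?case
    by (intro exI[of _ "\<lambda>_. A"]) (auto simp: partition_with_measures_def disjoint_family_on_def)
next
  case (insert b K)
  have "0 \<le> p b" "0 \<le> (\<Sum>b\<in>K. p b)" using insert.prems by (auto intro: sum_nonneg)
  moreover have total: "p b + (\<Sum>b\<in>K. p b) = measure M A" using insert by simp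
  ultimately obtain C where C: "C \<in> sets M" "C \<subseteq> A" "measure M C = p b"
    using atomless_subset_with_measure[OF al insert.prems(1), of "p b"] by auto
  have "measure M (A - C) = (\<Sum>b\<in>K. p b)"
    using C insert.prems(1) total by (simp add: finite_measure_Diff)
  then obtain B where B: "partition_with_measures M (A - C) K p B"
    using insert.IH[of "A - C"] insert.prems C by auto
  have "partition_with_measures M A (insert b K) p (B(b := C))"
    using B C insert.hyps
    unfolding partition_with_measures_def disjoint_family_on_def by (auto split: if_splits)
  then show ?case by blast
qed

lemma atomless_refine_partition:
  assumes al: "atomless M" and A: "partition_with_measures M S K p A"
    and fin: "finite K'" and \<pi>: "\<And>b. b \<in> K' \<Longrightarrow> \<pi> b \<in> K" "\<And>a. a \<in> K \<Longrightarrow> \<exists>b\<in>K'. \<pi> b = a"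
    and nonneg: "\<And>b. b \<in> K' \<Longrightarrow> 0 \<le> p' b"
    and sum: "\<And>a. a \<in> K \<Longrightarrow> p a = (\<Sum>b\<in>{b\<in>K'. \<pi> b = a}. p' b)"
  shows "\<exists>A'. partition_with_measures M S K' p' A' \<and> (\<forall>b\<in>K'. A' b \<subseteq> A (\<pi> b))"
proof -
  define fibre where "fibre a = {b\<in>K'. \<pi> b = a}" for a
  have "\<exists>B. partition_with_measures M (A a) (fibre a) p' B" if a: "a \<in> K" for a
    using A a \<pi>(2)[OF a] fin nonneg sum[OF a]
    by (intro atomless_partition_with_measures[OF al])
      (auto simp: partition_with_measures_def fibre_def)
  then obtain B where B: "\<And>a. a \<in> K \<Longrightarrow> partition_with_measures M (A a) (fibre a) p' (B a)"
    by metis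
  define A' where "A' b = B (\<pi> b) b" for b
  have fibre: "b \<in> fibre (\<pi> b)" if "b \<in> K'" for b using that unfolding fibre_def by auto
  have sub: "A' b \<subseteq> A (\<pi> b)" if "b \<in> K'" for b
    using B[OF \<pi>(1)[OF that]] fibre[OF that] unfolding A'_def partition_with_measures_def by blast
  have "disjoint_family_on A' K'"
  proof (unfold disjoint_family_on_def, intro ballI impI)
    fix b b' assume b: "b \<in> K'" "b' \<in> K'" "b \<noteq> b'"
    show "A' b \<inter> A' b' = {}"
    proof (cases "\<pi> b = \<pi> b'")
      case True
      then show ?thesis using B[OF \<pi>(1)[OF b(1)]] fibre b
        unfolding A'_def partition_with_measures_def disjoint_family_on_def by metis
    next
      case False
      then have "A (\<pi> b) \<inter> A (\<pi> b') = {}"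
        using A \<pi>(1) b unfolding partition_with_measures_def disjoint_family_on_def by blast
      then show ?thesis using sub b by blast
    qed
  qed
  moreover have "(\<Union>b\<in>K'. A' b) = S"
  proof
    show "(\<Union>b\<in>K'. A' b) \<subseteq> S" using sub A \<pi>(1) unfolding partition_with_measures_def by blast
    show "S \<subseteq> (\<Union>b\<in>K'. A' b)"
    proof
      fix x assume "x \<in> S"
      then obtain a where a: "a \<in> K" "x \<in> A a" using A unfolding partition_with_measures_def by auto
      then obtain b where "b \<in> fibre a" "x \<in> B a b"
        using B[OF a(1)] unfolding partition_with_measures_def by blast
      then show "x \<in> (\<Union>b\<in>K'. A' b)" unfolding fibre_def A'_def by auto
    qed
  qed
  moreover have "A' b \<in> sets M \<and> measure M (A' b) = p' b" if "b \<in> K'" for b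
    using B[OF \<pi>(1)[OF that]] fibre[OF that] unfolding A'_def partition_with_measures_def by blast
  ultimately show ?thesis using sub unfolding partition_with_measures_def by blast
qed

end

lemma (in prob_space) atomless_nested_partitions:
  fixes K :: "nat \<Rightarrow> 'b set" and p :: "nat \<Rightarrow> 'b \<Rightarrow> real" and \<pi> :: "nat \<Rightarrow> 'b \<Rightarrow> 'b"
  assumes al: "atomless M" and fin: "\<And>L. finite (K L)" and nonneg: "\<And>L b. b \<in> K L \<Longrightarrow> 0 \<le> p L b"
    and sum: "(\<Sum>b\<in>K 0. p 0 b) = 1"
    and \<pi>: "\<And>L b. b \<in> K (Suc L) \<Longrightarrow> \<pi> L b \<in> K L" "\<And>L a. a \<in> K L \<Longrightarrow> \<exists>b\<in>K (Suc L). \<pi> L b = a"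
    and consistent: "\<And>L a. a \<in> K L \<Longrightarrow> p L a = (\<Sum>b\<in>{b\<in>K (Suc L). \<pi> L b = a}. p (Suc L) b)"
  shows "\<exists>A. \<forall>L. partition_with_measures M (space M) (K L) (p L) (A L) \<and>
     (\<forall>b\<in>K (Suc L). A (Suc L) b \<subseteq> A L (\<pi> L b))"
proof -
  define P where "P L A \<longleftrightarrow> partition_with_measures M (space M) (K L) (p L) A"
    for L and A :: "'b \<Rightarrow> 'a set"
  define Q where "Q L A A' \<longleftrightarrow> (\<forall>b\<in>K (Suc L). A' b \<subseteq> A (\<pi> L b))"
    for L and A A' :: "'b \<Rightarrow> 'a set"
  have "K 0 \<noteq> {}" using sum by auto
  then obtain A0 where "P 0 A0"
    using atomless_partition_with_measures[OF al fin, of 0 "space M" "p 0"] nonneg sum prob_space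
    unfolding P_def by auto
  moreover have "\<exists>A'. P (Suc L) A' \<and> Q L A A'" if "P L A" for L A
    using atomless_refine_partition[OF al that[unfolded P_def] fin \<pi>(1,2) nonneg consistent]
    unfolding P_def Q_def by blast
  ultimately obtain A where "\<And>L. P L (A L)" "\<And>L. Q L (A L) (A (Suc L))"
    using dependent_nat_choice[of P Q] by metis
  then show ?thesis unfolding P_def Q_def by blast
qed

section \<open>Convergence of distribution functions\<close>

lemma is_cdf_mono: "is_cdf f \<Longrightarrow> x \<le> y \<Longrightarrow> f x \<le> f y"
  unfolding is_cdf_def right_continuous_mono_def by (auto dest: monoD)

lemma is_cdf_at_top: "is_cdf f \<Longrightarrow> (f \<longlongrightarrow> 1) at_top"
  unfolding is_cdf_def right_continuous_mono_def by auto

lemma is_cdf_at_bot: "is_cdf f \<Longrightarrow> (f \<longlongrightarrow> 0) at_bot"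
  unfolding is_cdf_def right_continuous_mono_def by auto

lemma is_cdf_bounded:
  assumes "is_cdf f"
  shows "0 \<le> f x" and "f x \<le> 1"
proof -
  have "eventually (\<lambda>y. f y \<le> f x) at_bot"
    unfolding eventually_at_bot_linorder using assms by (auto intro: is_cdf_mono)
  then show "0 \<le> f x"
    by (rule tendsto_le[OF trivial_limit_at_bot_linorder tendsto_const is_cdf_at_bot[OF assms]])
  have "eventually (\<lambda>y. f x \<le> f y) at_top"
    unfolding eventually_at_top_linorder using assms by (auto intro: is_cdf_mono)
  then show "f x \<le> 1"
    by (rule tendsto_le[OF trivial_limit_at_top_linorder is_cdf_at_top[OF assms] tendsto_const])
qed

lemma (in prob_space) rv_cdf_continuous_at_right:
  assumes f: "f \<in> borel_measurable M"
  shows "continuous (at_right t) (rv_cdf M f)"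
proof -
  interpret R: real_distribution "distr M borel f" using f by simp
  have "rv_cdf M f = cdf (distr M borel f)"
    using f unfolding rv_cdf_def cdf_def
      by (auto simp: measure_distr vimage_def Int_def conj_commute)
  then show ?thesis using R.cdf_is_right_cont by simp
qed

lemma right_continuous_ge_off_countable:
  fixes f :: "real \<Rightarrow> real"
  assumes "continuous (at_right t) f" and "countable C"
    and ge: "\<And>y. t < y \<Longrightarrow> y \<notin> C \<Longrightarrow> P \<le> f y"
  shows "P \<le> f t"
proof (rule ccontr)
  assume "\<not> P \<le> f t"
  then have "eventually (\<lambda>y. f y < P) (at_right t)"
    using assms(1) by (intro order_tendstoD(2)) (auto simp: continuous_within)
  then obtain b where b: "t < b" "\<And>y. t < y \<Longrightarrow> y < b \<Longrightarrow> f y < P"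
    unfolding eventually_at_right_field by blast
  obtain y where "y \<in> {t<..<b}" "y \<notin> C" using open_minus_countable[OF assms(2), of "{t<..<b}"] b(1)
    by auto
  then show False using ge b(2) by force
qed

lemma filterlim_of_nat_minus_at_top: "filterlim (\<lambda>L::nat. real L - s) at_top sequentially"
  using filterlim_tendsto_add_at_top[OF tendsto_const[of "-s"] filterlim_real_sequentially] by simp

lemma filterlim_minus_of_nat_at_bot: "filterlim (\<lambda>L::nat. s - real L) at_bot sequentially"
  using filterlim_of_nat_minus_at_top[of s] unfolding filterlim_uminus_at_top by simp

lemma LIMSEQ_divide_power_2: "(\<lambda>L. c / (2::real)^L) \<longlonglongrightarrow> 0"
proof -
  have "(\<lambda>L. c * (1/2::real)^L) \<longlonglongrightarrow> c * 0"
    by (intro tendsto_mult tendsto_const LIMSEQ_power_zero) auto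
  then show ?thesis by (simp add: power_divide)
qed

text \<open>Points outside N L count as lying below t; this matches the treatment of the cell None in
  cell_cdf.\<close>

lemma (in prob_space) tendsto_measure_le_of_increasing_approx:
  fixes N :: "nat \<Rightarrow> 'a set" and Z :: "nat \<Rightarrow> 'a \<Rightarrow> real" and W :: "'a \<Rightarrow> real"
  assumes N: "\<And>L. N L \<in> sets M" "\<And>L. N L \<subseteq> N (Suc L)" "(\<lambda>L. measure M (N L)) \<longlonglongrightarrow> 1"
    and Z: "\<And>L. Z L \<in> borel_measurable M" "W \<in> borel_measurable M"
    and mono: "\<And>L \<omega>. \<omega> \<in> N L \<Longrightarrow> Z L \<omega> \<le> Z (Suc L) \<omega>"
    and lim: "\<And>\<omega>. \<omega> \<in> space M \<Longrightarrow> (\<lambda>L. Z L \<omega>) \<longlonglongrightarrow> W \<omega>"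
  shows "(\<lambda>L. measure M ((space M - N L) \<union> {\<omega>\<in>space M. Z L \<omega> \<le> t}))
    \<longlonglongrightarrow> measure M {\<omega>\<in>space M. W \<omega> \<le> t}"
proof -
  have N_space: "N L \<subseteq> space M" for L using N(1) sets.sets_into_space by auto
  have N_mono: "\<omega> \<in> N L \<Longrightarrow> \<omega> \<in> N (m + L)" for \<omega> L m
    by (induction m) (use N(2) in auto)
  have tail_lim: "(\<lambda>m. Z (m + L) \<omega>) \<longlonglongrightarrow> W \<omega>" if "\<omega> \<in> space M" for \<omega> L
    using lim[OF that] by (rule LIMSEQ_ignore_initial_segment[where k = L, simplified])
  have Z_le_W: "Z L \<omega> \<le> W \<omega>" if \<omega>: "\<omega> \<in> N L" for \<omega> L
  proof -
    have "incseq (\<lambda>m. Z (m + L) \<omega>)" using mono N_mono[OF \<omega>] by (intro incseq_SucI) simp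
    then show ?thesis using incseq_le[OF _ tail_lim, of L \<omega> 0] \<omega> N_space by auto
  qed
  define E where "E L = (space M - N L) \<union> {\<omega>\<in>space M. Z L \<omega> \<le> t}" for L
  have E_sets: "E L \<in> sets M" for L unfolding E_def using N(1) Z(1) by measurable
  have "decseq E"
  proof (intro decseq_SucI subsetI)
    fix L \<omega> assume "\<omega> \<in> E (Suc L)"
    then show "\<omega> \<in> E L"
      using N(2)[of L] mono[of \<omega> L] unfolding E_def by (cases "\<omega> \<in> N L") auto
  qed
  then have lim_E: "(\<lambda>L. measure M (E L)) \<longlonglongrightarrow> measure M (\<Inter>L. E L)"
    using E_sets by (intro finite_Lim_measure_decseq) auto
  have W_sets: "{\<omega>\<in>space M. W \<omega> \<le> t} \<in> sets M" using Z(2) by measurable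
  have W_sub: "{\<omega>\<in>space M. W \<omega> \<le> t} \<subseteq> (\<Inter>L. E L)"
    unfolding E_def using Z_le_W by fastforce
  have exceptional: "(\<Inter>L. E L) - {\<omega>\<in>space M. W \<omega> \<le> t} \<subseteq> space M - (\<Union>L. N L)"
  proof
    fix \<omega> assume \<omega>: "\<omega> \<in> (\<Inter>L. E L) - {\<omega>\<in>space M. W \<omega> \<le> t}"
    then have "\<omega> \<in> space M" unfolding E_def by auto
    moreover have "\<omega> \<notin> N L" for L
    proof
      assume "\<omega> \<in> N L"
      then have "Z (m + L) \<omega> \<le> t" for m using N_mono[of \<omega> L m] \<omega> unfolding E_def by auto
      then have "W \<omega> \<le> t" using \<open>\<omega> \<in> space M\<close> by (intro LIMSEQ_le_const2[OF tail_lim]) auto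
      then show False using \<omega> \<open>\<omega> \<in> space M\<close> by auto
    qed
    ultimately show "\<omega> \<in> space M - (\<Union>L. N L)" by auto
  qed
  have "(\<lambda>L. measure M (N L)) \<longlonglongrightarrow> measure M (\<Union>L. N L)"
    using N(1,2) by (intro finite_Lim_measure_incseq) (auto intro: incseq_SucI)
  then have "measure M (\<Union>L. N L) = 1" using N(3) LIMSEQ_unique by blast
  moreover have N_union: "(\<Union>L. N L) \<in> sets M" using N(1) by auto
  ultimately have "measure M (space M - (\<Union>L. N L)) = 0" using prob_compl by simp
  moreover have "measure M ((\<Inter>L. E L) - {\<omega>\<in>space M. W \<omega> \<le> t}) \<le> measure M (space M - (\<Union>L. N L))"
    using exceptional N_union by (intro finite_measure_mono) auto
  ultimately have "measure M ((\<Inter>L. E L) - {\<omega>\<in>space M. W \<omega> \<le> t}) = 0"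
    by (simp add: measure_le_0_iff)
  then have "measure M (\<Inter>L. E L) = measure M {\<omega>\<in>space M. W \<omega> \<le> t}"
    using E_sets W_sets W_sub by (subst (asm) finite_measure_Diff) auto
  then show ?thesis using lim_E unfolding E_def by simp
qed

lemma (in finite_measure) measure_pred_finite_range:
  assumes "finite K" and "\<And>\<omega>. \<omega> \<in> space M \<Longrightarrow> f \<omega> \<in> K"
    and events: "\<And>b. {\<omega>\<in>space M. f \<omega> = b} \<in> sets M"
  shows "measure M {\<omega>\<in>space M. \<phi> (f \<omega>)} =
    (\<Sum>b\<in>K. if \<phi> b then measure M {\<omega>\<in>space M. f \<omega> = b} else 0)"
proof -
  have "{\<omega>\<in>space M. \<phi> (f \<omega>)} = (\<Union>b\<in>{b\<in>K. \<phi> b}. {\<omega>\<in>space M. f \<omega> = b})" using assms(2) by auto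
  then have "measure M {\<omega>\<in>space M. \<phi> (f \<omega>)} = (\<Sum>b\<in>{b\<in>K. \<phi> b}. measure M {\<omega>\<in>space M. f \<omega> = b})"
    using assms(1) events by (auto intro!: finite_measure_finite_Union simp: disjoint_family_on_def)
  also have "\<dots> = (\<Sum>b\<in>K. if \<phi> b then measure M {\<omega>\<in>space M. f \<omega> = b} else 0)"
    using assms(1) by (simp add: sum.inter_filter)
  finally show ?thesis .
qed

lemma bounded_family_convergent_subseq:
  fixes f :: "'i::countable \<Rightarrow> nat \<Rightarrow> real"
  assumes "\<And>i. bounded (range (f i))"
  shows "\<exists>r. strict_mono r \<and> (\<forall>i. convergent (\<lambda>k. f i (r k)))"
proof -
  let ?P = "\<lambda>m s. convergent (\<lambda>k. f (from_nat m) (s k))"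
  interpret subseqs ?P
  proof (unfold subseqs_def, intro allI impI)
    fix m :: nat and s :: "nat \<Rightarrow> nat"
    have "bounded (range (\<lambda>k. f (from_nat m) (s k)))"
      using assms by (rule bounded_subset) auto
    then obtain l r where "strict_mono r" "((\<lambda>k. f (from_nat m) (s k)) \<circ> r) \<longlonglongrightarrow> l"
      using bounded_imp_convergent_subsequence by blast
    then show "\<exists>r. strict_mono r \<and> ?P m (s \<circ> r)" by (auto simp: convergent_def comp_def)
  qed
  have "?P m diagseq" for m
  proof -
    have "(\<lambda>k. f (from_nat m) ((seqseq (Suc m) \<circ> (\<lambda>k. fold_reduce (Suc m) k (Suc m + k))) k)) =
      (\<lambda>k. f (from_nat m) (seqseq (Suc m) k)) \<circ> (\<lambda>k. fold_reduce (Suc m) k (Suc m + k))"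
      by auto
    then have "?P m (diagseq \<circ> ((+) (Suc m)))"
      unfolding diagseq_seqseq
      by (simp only:) (intro convergent_subseq_convergent seqseq_holds subseq_diagonal_rest)
    then obtain l where "(\<lambda>k. f (from_nat m) (diagseq (k + Suc m))) \<longlonglongrightarrow> l"
      by (auto simp: add.commute dest: convergentD)
    then have "(\<lambda>k. f (from_nat m) (diagseq k)) \<longlonglongrightarrow> l" by (rule LIMSEQ_offset)
    then show ?thesis by (auto simp: convergent_def)
  qed
  then show ?thesis using subseq_diagseq by (metis from_nat_to_nat)
qed

lemma convergent_increments_le_power_2:
  fixes a :: "nat \<Rightarrow> real"
  assumes inc: "\<And>m. a m \<le> a (Suc m)" and step: "\<And>m. a (Suc m) \<le> a m + 1 / 2^m"
  shows "convergent a"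
proof -
  have "a m + 2 / 2^m \<le> a 0 + 2" for m
  proof (induction m)
    case (Suc m)
    then show ?case using step[of m] by simp
  qed simp
  moreover have "0 \<le> (2::real) / 2^m" for m by simp
  ultimately have "a m \<le> a 0 + 2" for m by (smt (verit))
  moreover have "incseq a" using inc by (rule incseq_SucI)
  ultimately obtain l where "a \<longlonglongrightarrow> l" using incseq_convergent[of a "a 0 + 2"] by blast
  then show ?thesis by (auto simp: convergent_def)
qed

text \<open>The two bounds pass to the limit in k and then in L at the points outside C, where the H k
  converge; right continuity of P and H extends the resulting inequalities to every t.\<close>

lemma cdf_eq_of_double_limit:
  fixes H P :: "real \<Rightarrow> real" and Hk :: "nat \<Rightarrow> real \<Rightarrow> real"
    and q :: "nat \<Rightarrow> nat \<Rightarrow> real \<Rightarrow> real" and ql :: "nat \<Rightarrow> real \<Rightarrow> real"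
    and e :: "nat \<Rightarrow> nat \<Rightarrow> real" and el \<delta> :: "nat \<Rightarrow> real"
  assumes "countable C" and "continuous (at_right t) H" and "continuous (at_right t) P"
    and "mono H" and "\<And>k. mono (Hk k)" and Hk_lim: "\<And>x. x \<notin> C \<Longrightarrow> (\<lambda>k. Hk k x) \<longlonglongrightarrow> H x"
    and q_lim: "\<And>L x. (\<lambda>k. q k L x) \<longlonglongrightarrow> ql L x" and ql_lim: "\<And>x. (\<lambda>L. ql L x) \<longlonglongrightarrow> P x"
    and e_lim: "\<And>L. (\<lambda>k. e k L) \<longlonglongrightarrow> el L" and el_lim: "el \<longlonglongrightarrow> 0" and \<delta>_lim: "\<delta> \<longlonglongrightarrow> 0"
    and lower: "\<And>k L x. Hk k x \<le> q k L x" and upper: "\<And>k L x. q k L x \<le> e k L + Hk k (x + \<delta> L)"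
  shows "P t = H t"
proof (rule antisym)
  have "P x \<le> H y" if "x < y" "y \<notin> C" for x y
  proof -
    obtain N where N: "\<And>L. N \<le> L \<Longrightarrow> \<delta> L < y - x"
      using order_tendstoD(2)[OF \<delta>_lim, of "y - x"] \<open>x < y\<close> by (auto simp: eventually_sequentially)
    have "ql L x \<le> el L + H y" if "N \<le> L" for L
    proof (rule LIMSEQ_le[OF q_lim tendsto_add[OF e_lim Hk_lim[OF \<open>y \<notin> C\<close>]]], intro exI allI impI)
      fix k
      have "Hk k (x + \<delta> L) \<le> Hk k y" using N[OF that] \<open>mono (Hk k)\<close> by (simp add: monoD)
      then show "q k L x \<le> e k L + Hk k y" using upper[of k L x] by simp
    qed
    then have "P x \<le> 0 + H y"
      by (intro LIMSEQ_le[OF ql_lim tendsto_add[OF el_lim tendsto_const]]) auto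
    then show ?thesis by simp
  qed
  then show "P t \<le> H t"
    by (intro right_continuous_ge_off_countable[OF assms(2,1)]) auto
next
  have "H y \<le> P y" if "y \<notin> C" for y
  proof (rule LIMSEQ_le_const[OF ql_lim], intro exI allI impI)
    fix L
    show "H y \<le> ql L y"
      using lower by (intro LIMSEQ_le[OF Hk_lim[OF that] q_lim]) auto
  qed
  moreover have "H t \<le> H y" if "t < y" for y using \<open>mono H\<close> that by (simp add: monoD)
  ultimately show "H t \<le> P t"
    by (intro right_continuous_ge_off_countable[OF assms(3,1)]) (blast intro: order_trans)
qed

section \<open>Dyadic cells\<close>

text \<open>At level L a point (x, p, c) of the randomised experiment, with values x, permutation p
  and shift vector c, is recorded through the dyadic floors of the x i and c i at resolution
  2^-L together with p; all points where some x i or c i leaves the window [-L, L) are lumped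
  into the cell None.\<close>

type_synonym cell = "(int list \<times> nat list \<times> int list) option"

definition dyadic_floor :: "nat \<Rightarrow> real \<Rightarrow> int" where
  "dyadic_floor L y = \<lfloor>y * 2^L\<rfloor>"

definition in_window :: "nat \<Rightarrow> real \<Rightarrow> bool" where
  "in_window L y \<longleftrightarrow> - real L \<le> y \<and> y < real L"

definition in_int_window :: "nat \<Rightarrow> int \<Rightarrow> bool" where
  "in_int_window L z \<longleftrightarrow> - (int L * 2^L) \<le> z \<and> z < int L * 2^L"

definition cell_of :: "nat \<Rightarrow> nat \<Rightarrow> (nat \<Rightarrow> real) \<Rightarrow> (nat \<Rightarrow> nat) \<Rightarrow> (nat \<Rightarrow> real) \<Rightarrow> cell" where
  "cell_of n L x p c = (if \<forall>i<n. in_window L (x i) \<and> in_window L (c i)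
     then Some (map (\<lambda>i. dyadic_floor L (x i)) [0..<n], map p [0..<n],
       map (\<lambda>i. dyadic_floor L (c i)) [0..<n])
     else None)"

definition coarsen :: "nat \<Rightarrow> cell \<Rightarrow> cell" where
  "coarsen L b = (case b of None \<Rightarrow> None | Some (g, s, h) \<Rightarrow>
     if (\<forall>z\<in>set g. in_int_window L (z div 2)) \<and> (\<forall>z\<in>set h. in_int_window L (z div 2))
     then Some (map (\<lambda>z. z div 2) g, s, map (\<lambda>z. z div 2) h) else None)"

definition cells :: "nat \<Rightarrow> nat \<Rightarrow> cell set" where
  "cells n L = insert None (Some ` ({g. set g \<subseteq> {z. in_int_window L z} \<and> length g = n} \<times>
     {s. set s \<subseteq> {..<n} \<and> length s = n} \<times> {h. set h \<subseteq> {z. in_int_window L z} \<and> length h = n}))"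

text \<open>The value of coordinate i on a cell is the lower dyadic approximation of x (p i) + c i.\<close>

definition cell_value :: "nat \<Rightarrow> nat \<Rightarrow> cell \<Rightarrow> real" where
  "cell_value L i b = (case b of None \<Rightarrow> 0
     | Some (g, s, h) \<Rightarrow> (of_int (g ! (s ! i)) + of_int (h ! i)) / 2^L)"

lemma in_window_iff_dyadic_floor: "in_window L y \<longleftrightarrow> in_int_window L (dyadic_floor L y)"
proof -
  have "- (int L * 2^L) \<le> \<lfloor>y * 2^L\<rfloor> \<longleftrightarrow> - real L \<le> y"
  proof -
    have "- (int L * 2^L) \<le> \<lfloor>y * 2^L\<rfloor> \<longleftrightarrow> of_int (- (int L * 2^L)) \<le> y * 2^L" by (rule le_floor_iff)
    also have "\<dots> \<longleftrightarrow> (- real L) * 2^L \<le> y * 2^L" by simp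
    also have "\<dots> \<longleftrightarrow> - real L \<le> y" by (rule mult_le_cancel_right_pos) simp
    finally show ?thesis .
  qed
  moreover have "\<lfloor>y * 2^L\<rfloor> < int L * 2^L \<longleftrightarrow> y < real L"
  proof -
    have "\<lfloor>y * 2^L\<rfloor> < int L * 2^L \<longleftrightarrow> y * 2^L < of_int (int L * 2^L)" by (rule floor_less_iff)
    also have "\<dots> \<longleftrightarrow> y * 2^L < real L * 2^L" by simp
    also have "\<dots> \<longleftrightarrow> y < real L" by (rule mult_less_cancel_right_pos) simp
    finally show ?thesis .
  qed
  ultimately show ?thesis unfolding in_window_def in_int_window_def dyadic_floor_def by auto
qed

lemma dyadic_floor_eq_iff: "dyadic_floor L y = z \<longleftrightarrow> of_int z \<le> y * 2^L \<and> y * 2^L < of_int z + 1"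
  unfolding dyadic_floor_def by (rule floor_eq_iff)

lemma dyadic_floor_Suc: "dyadic_floor (Suc L) y div 2 = dyadic_floor L y"
proof -
  define z where "z = dyadic_floor L y"
  define z' where "z' = dyadic_floor (Suc L) y"
  have "of_int z \<le> y * 2^L" "y * 2^L < of_int z + 1" unfolding z_def dyadic_floor_def by linarith+
  then have a: "of_int (2*z) \<le> y * 2^Suc L" "y * 2^Suc L < of_int (2*z) + 2" by auto
  have "of_int z' \<le> y * 2^Suc L" "y * 2^Suc L < of_int z' + 1" unfolding z'_def dyadic_floor_def
    by linarith+
  have "2*z \<le> z'" unfolding z'_def dyadic_floor_def using a(1) by (simp only: le_floor_iff)
  moreover have "z' < 2*z + 2"
  proof -
    have "real_of_int z' < real_of_int (2*z + 2)" using a(2) \<open>of_int z' \<le> y * 2^Suc L\<close> by simp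
    then show ?thesis by (simp only: of_int_less_iff)
  qed
  ultimately have "2*z \<le> z'" "z' \<le> 2*z+1" by auto
  then have "z' div 2 = z" by presburger
  then show ?thesis unfolding z_def z'_def .
qed

lemma dyadic_floor_le: "of_int (dyadic_floor L y) / 2^L \<le> y"
  and less_dyadic_floor_add: "y < of_int (dyadic_floor L y) / 2^L + 1 / 2^L"
proof -
  have "of_int (dyadic_floor L y) \<le> y * 2^L" "y * 2^L < of_int (dyadic_floor L y) + 1"
    unfolding dyadic_floor_def by linarith+
  then show "of_int (dyadic_floor L y) / 2^L \<le> y" "y < of_int (dyadic_floor L y) / 2^L + 1 / 2^L"
    by (simp_all add: field_simps)
qed

lemma in_window_Suc: "in_window L y \<Longrightarrow> in_window (Suc L) y"
  unfolding in_window_def by auto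

lemma coarsen_cell_of: "coarsen L (cell_of n (Suc L) x p c) = cell_of n L x p c"
proof (cases "\<forall>i<n. in_window (Suc L) (x i) \<and> in_window (Suc L) (c i)")
  case False
  then have "\<not> (\<forall>i<n. in_window L (x i) \<and> in_window L (c i))" using in_window_Suc by blast
  with False show ?thesis unfolding cell_of_def coarsen_def by auto
next
  case True
  then show ?thesis unfolding cell_of_def coarsen_def
    by (auto simp: dyadic_floor_Suc in_window_iff_dyadic_floor[of L] comp_def)
qed

lemma finite_int_window: "finite {z. in_int_window L z}"
proof -
  have "{z. in_int_window L z} = {- (int L * 2^L)..< int L * 2^L}" unfolding in_int_window_def
    by auto
  then show ?thesis by simp
qed

lemma finite_cells: "finite (cells n L)"
  unfolding cells_def
  by (intro finite_insert[THEN iffD2] finite_imageI finite_cartesian_product finite_lists_length_eq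
      finite_int_window finite_lessThan)

lemma cell_of_in_cells: "(\<And>i. i < n \<Longrightarrow> p i < n) \<Longrightarrow> cell_of n L x p c \<in> cells n L"
  unfolding cell_of_def cells_def by (auto simp: in_window_iff_dyadic_floor image_iff)

lemma cell_of_eq_None: "cell_of n L x p c = None \<longleftrightarrow> \<not> (\<forall>i<n. in_window L (x i) \<and> in_window L (c i))"
  unfolding cell_of_def by simp

lemma coarsen_None [simp]: "coarsen L None = None"
  unfolding coarsen_def by simp

lemma Some_in_cells: "Some (g, s, h) \<in> cells n L \<longleftrightarrow>
    length g = n \<and> set g \<subseteq> {z. in_int_window L z} \<and> length s = n \<and> set s \<subseteq> {..<n} \<and>
    length h = n \<and> set h \<subseteq> {z. in_int_window L z}"
  unfolding cells_def by auto

lemma None_in_cells [simp]: "None \<in> cells n L"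
  unfolding cells_def by simp

lemma coarsen_in_cells:
  assumes "b \<in> cells n (Suc L)"
  shows "coarsen L b \<in> cells n L"
proof (cases b)
  case (Some t)
  then obtain g s h where b: "b = Some (g, s, h)" by (cases t) auto
  then show ?thesis using assms by (auto simp: coarsen_def Some_in_cells)
qed simp

lemma in_int_window_double: "in_int_window L z \<Longrightarrow> in_int_window (Suc L) (2 * z)"
proof -
  have "int (Suc L) * 2^Suc L = 2 * (int L * 2^L) + 2 * 2^L" by (simp add: algebra_simps)
  moreover have "(0::int) \<le> 2 * 2^L" by simp
  ultimately show "in_int_window L z \<Longrightarrow> in_int_window (Suc L) (2 * z)"
    unfolding in_int_window_def by linarith
qed

lemma coarsen_surj:
  assumes "a \<in> cells n L"
  shows "\<exists>b\<in>cells n (Suc L). coarsen L b = a"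
proof (cases a)
  case None
  then show ?thesis by (intro bexI[of _ None]) auto
next
  case (Some t)
  then obtain g s h where a: "a = Some (g, s, h)" by (cases t) auto
  let ?b = "Some (map ((*) 2) g, s, map ((*) 2) h)"
  have "?b \<in> cells n (Suc L)"
    using assms in_int_window_double unfolding a Some_in_cells by auto
  moreover have "coarsen L ?b = a"
    using assms unfolding a Some_in_cells by (auto simp: coarsen_def comp_def map_idI)
  ultimately show ?thesis by blast
qed

lemma cell_value_cell_of:
  assumes "cell_of n L x p c \<noteq> None" "i < n" "p i < n"
  shows "cell_value L i (cell_of n L x p c) =
    (of_int (dyadic_floor L (x (p i))) + of_int (dyadic_floor L (c i))) / 2^L"
  using assms unfolding cell_of_def cell_value_def by (auto split: if_splits)

lemma halved_sum_bounds:
  fixes u v :: int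
  shows "(of_int (u div 2) + of_int (v div 2)) / 2^L \<le> (of_int u + of_int v) / (2::real)^Suc L"
    and "(of_int u + of_int v) / (2::real)^Suc L \<le>
      (of_int (u div 2) + of_int (v div 2)) / 2^L + 1 / 2^L"
proof -
  have "2 * (u div 2) \<le> u" "u \<le> 2 * (u div 2) + 1" "2 * (v div 2) \<le> v" "v \<le> 2 * (v div 2) + 1"
    by presburger+
  then have "real_of_int (2 * (u div 2)) \<le> of_int u" "of_int u \<le> real_of_int (2 * (u div 2) + 1)"
    "real_of_int (2 * (v div 2)) \<le> of_int v" "of_int v \<le> real_of_int (2 * (v div 2) + 1)"
    by linarith+
  then have lower: "of_int (u div 2) + of_int (v div 2) \<le> (of_int u + of_int v) / (2::real)"
    and upper: "(of_int u + of_int v) / (2::real) \<le> of_int (u div 2) + of_int (v div 2) + 1"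
    by simp_all
  have eq: "(of_int u + of_int v) / (2::real)^Suc L = ((of_int u + of_int v) / 2) / 2^L"
    by simp
  show "(of_int (u div 2) + of_int (v div 2)) / 2^L \<le> (of_int u + of_int v) / (2::real)^Suc L"
    unfolding eq by (rule divide_right_mono[OF lower]) simp
  show "(of_int u + of_int v) / (2::real)^Suc L \<le>
      (of_int (u div 2) + of_int (v div 2)) / 2^L + 1 / 2^L"
    unfolding eq using divide_right_mono[OF upper, of "2^L"] by (simp add: add_divide_distrib)
qed

lemma cell_value_coarsen:
  assumes b: "b \<in> cells n (Suc L)" and "coarsen L b \<noteq> None" and i: "i < n"
  shows "cell_value L i (coarsen L b) \<le> cell_value (Suc L) i b"
    and "cell_value (Suc L) i b \<le> cell_value L i (coarsen L b) + 1 / 2^L"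
proof -
  obtain g s h where b_eq: "b = Some (g, s, h)" using assms(2) by (cases b) auto
  then have "length g = n" "length h = n" "s ! i < n"
    using b i unfolding b_eq Some_in_cells by (auto simp: subset_iff)
  moreover have "coarsen L b = Some (map (\<lambda>z. z div 2) g, s, map (\<lambda>z. z div 2) h)"
    using assms(2) unfolding coarsen_def b_eq by (auto split: if_splits)
  ultimately have
    "cell_value L i (coarsen L b) = (of_int (g ! (s ! i) div 2) + of_int (h ! i div 2)) / 2^L"
    and "cell_value (Suc L) i b = (of_int (g ! (s ! i)) + of_int (h ! i)) / 2^Suc L"
    using i unfolding cell_value_def b_eq by simp_all
  then show "cell_value L i (coarsen L b) \<le> cell_value (Suc L) i b"
    and "cell_value (Suc L) i b \<le> cell_value L i (coarsen L b) + 1 / 2^L"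
    using halved_sum_bounds by simp_all
qed

definition cell_mass :: "nat \<Rightarrow> nat \<Rightarrow> (cell \<Rightarrow> real) \<Rightarrow> (cell \<Rightarrow> bool) \<Rightarrow> real" where
  "cell_mass n L p \<phi> = (\<Sum>b\<in>cells n L. if \<phi> b then p b else 0)"

text \<open>The cell None is counted as lying below every t; its mass vanishes in the limit.\<close>

definition cell_cdf :: "nat \<Rightarrow> nat \<Rightarrow> (cell \<Rightarrow> real) \<Rightarrow> (cell \<Rightarrow> real) \<Rightarrow> real \<Rightarrow> real" where
  "cell_cdf n L p v t = cell_mass n L p (\<lambda>b. b = None \<or> v b \<le> t)"

lemma tendsto_cell_mass:
  assumes "\<And>b. ((\<lambda>k. p k b) \<longlongrightarrow> p' b) F"
  shows "((\<lambda>k. cell_mass n L (p k) \<phi>) \<longlongrightarrow> cell_mass n L p' \<phi>) F"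
proof (unfold cell_mass_def, intro tendsto_sum)
  fix b
  show "((\<lambda>k. if \<phi> b then p k b else 0) \<longlongrightarrow> (if \<phi> b then p' b else 0)) F"
    using assms by (cases "\<phi> b") auto
qed

section \<open>The limiting coupling\<close>

locale mixture_limit = prob_space M for M :: "'a measure" +
  fixes n :: nat and F G :: "nat \<Rightarrow> real \<Rightarrow> real" and X :: "nat \<Rightarrow> 'a \<Rightarrow> real"
    and J :: "nat \<Rightarrow> 'j set" and w :: "nat \<Rightarrow> 'j \<Rightarrow> real"
    and \<pi> :: "nat \<Rightarrow> 'j \<Rightarrow> nat \<Rightarrow> nat" and shift :: "nat \<Rightarrow> 'j \<Rightarrow> nat \<Rightarrow> real"
  assumes atomless: "atomless M"
    and F_cdf: "\<And>i. i < n \<Longrightarrow> is_cdf (F i)"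
    and G_cdf: "\<And>i. i < n \<Longrightarrow> is_cdf (G i)"
    and X_measurable: "\<And>i. i < n \<Longrightarrow> X i \<in> borel_measurable M"
    and rv_cdf_X: "\<And>i. i < n \<Longrightarrow> rv_cdf M (X i) = F i"
    and w_nonneg: "\<And>k j. j \<in> J k \<Longrightarrow> 0 \<le> w k j"
    and sum_w: "\<And>k. (\<Sum>j\<in>J k. w k j) = 1"
    and \<pi>_permutes: "\<And>k j. j \<in> J k \<Longrightarrow> \<pi> k j permutes {..<n}"
    and sum_shift: "\<And>k j. j \<in> J k \<Longrightarrow> (\<Sum>i<n. shift k j i) = 0"
    and weak_conv_G:
      "\<And>i. i < n \<Longrightarrow> weak_conv (\<lambda>k t. \<Sum>j\<in>J k. w k j * F (\<pi> k j i) (t - shift k j i)) (G i)"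
begin

definition Gk :: "nat \<Rightarrow> nat \<Rightarrow> real \<Rightarrow> real" where
  "Gk k i t = (\<Sum>j\<in>J k. w k j * F (\<pi> k j i) (t - shift k j i))"

definition cell_at :: "nat \<Rightarrow> nat \<Rightarrow> 'j \<Rightarrow> 'a \<Rightarrow> cell" where
  "cell_at k L j \<omega> = cell_of n L (\<lambda>i. X i \<omega>) (\<pi> k j) (shift k j)"

text \<open>The law of the cell of (X, \<pi> k j, shift k j) when the index j is drawn with probability
  w k j independently of X. Working with this law rather than with random variables avoids the need
  for randomisation on M.\<close>

definition cell_prob :: "nat \<Rightarrow> nat \<Rightarrow> cell \<Rightarrow> real" where
  "cell_prob k L b = (\<Sum>j\<in>J k. w k j * measure M {\<omega>\<in>space M. cell_at k L j \<omega> = b})"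

lemma \<pi>_less: "j \<in> J k \<Longrightarrow> i < n \<Longrightarrow> \<pi> k j i < n"
  using permutes_in_image[OF \<pi>_permutes] by auto

lemma cell_at_in_cells: "j \<in> J k \<Longrightarrow> cell_at k L j \<omega> \<in> cells n L"
  unfolding cell_at_def by (rule cell_of_in_cells) (rule \<pi>_less)

lemma cell_at_event: "{\<omega>\<in>space M. cell_at k L j \<omega> = b} \<in> sets M"
proof -
  define inside where "inside \<omega> \<longleftrightarrow>
    (\<forall>i<n. (- real L \<le> X i \<omega> \<and> X i \<omega> < real L) \<and> in_window L (shift k j i))" for \<omega>
  have inside_pred: "Measurable.pred M inside" unfolding inside_def using X_measurable by measurable
  have cell_at_eq: "cell_at k L j \<omega> = (if inside \<omega>
      then Some (map (\<lambda>i. dyadic_floor L (X i \<omega>)) [0..<n], map (\<pi> k j) [0..<n],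
        map (\<lambda>i. dyadic_floor L (shift k j i)) [0..<n])
      else None)" for \<omega>
    unfolding cell_at_def cell_of_def inside_def in_window_def by simp
  show ?thesis
  proof (cases b)
    case None
    then have "{\<omega>\<in>space M. cell_at k L j \<omega> = b} = {\<omega>\<in>space M. \<not> inside \<omega>}"
      unfolding cell_at_eq by auto
    then show ?thesis using inside_pred by (simp add: pred_def)
  next
    case (Some t)
    then obtain g s h where b: "b = Some (g, s, h)" by (cases t) auto
    have "map (\<lambda>i. dyadic_floor L (X i \<omega>)) [0..<n] = g \<longleftrightarrow> length g = n \<and>
      (\<forall>i<n. of_int (g ! i) \<le> X i \<omega> * 2^L \<and> X i \<omega> * 2^L < of_int (g ! i) + 1)" for \<omega>
      by (auto simp: list_eq_iff_nth_eq dyadic_floor_eq_iff)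
    then have "{\<omega>\<in>space M. cell_at k L j \<omega> = b} = {\<omega>\<in>space M. inside \<omega> \<and> length g = n \<and>
       (\<forall>i<n. of_int (g ! i) \<le> X i \<omega> * 2^L \<and> X i \<omega> * 2^L < of_int (g ! i) + 1) \<and>
       map (\<pi> k j) [0..<n] = s \<and> map (\<lambda>i. dyadic_floor L (shift k j i)) [0..<n] = h}"
      unfolding cell_at_eq b by auto
    also have "\<dots> \<in> sets M" using X_measurable inside_pred by measurable
    finally show ?thesis .
  qed
qed

lemma cell_at_pred_event: "j \<in> J k \<Longrightarrow> {\<omega>\<in>space M. \<phi> (cell_at k L j \<omega>)} \<in> sets M"
proof -
  assume "j \<in> J k"
  then have "{\<omega>\<in>space M. \<phi> (cell_at k L j \<omega>)} =
      (\<Union>b\<in>{b\<in>cells n L. \<phi> b}. {\<omega>\<in>space M. cell_at k L j \<omega> = b})"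
    using cell_at_in_cells by auto
  then show ?thesis using cell_at_event finite_cells by auto
qed

lemma cell_mass_cell_prob:
  "cell_mass n L (cell_prob k L) \<phi> = (\<Sum>j\<in>J k. w k j * measure M {\<omega>\<in>space M. \<phi> (cell_at k L j \<omega>)})"
proof -
  have "cell_mass n L (cell_prob k L) \<phi> = (\<Sum>b\<in>cells n L. \<Sum>j\<in>J k. w k j *
      (if \<phi> b then measure M {\<omega>\<in>space M. cell_at k L j \<omega> = b} else 0))"
    unfolding cell_mass_def cell_prob_def by (intro sum.cong) (auto simp: sum_distrib_left)
  also have "\<dots> = (\<Sum>j\<in>J k. w k j *
      (\<Sum>b\<in>cells n L. if \<phi> b then measure M {\<omega>\<in>space M. cell_at k L j \<omega> = b} else 0))"
    by (subst sum.swap) (simp add: sum_distrib_left)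
  also have "\<dots> = (\<Sum>j\<in>J k. w k j * measure M {\<omega>\<in>space M. \<phi> (cell_at k L j \<omega>)})"
    by (intro sum.cong refl arg_cong2[where f = "(*)"] measure_pred_finite_range[symmetric]
        finite_cells cell_at_in_cells cell_at_event)
  finally show ?thesis .
qed

lemma cell_prob_nonneg: "0 \<le> cell_prob k L b"
  unfolding cell_prob_def using w_nonneg by (intro sum_nonneg mult_nonneg_nonneg) auto

lemma sum_cell_prob: "(\<Sum>b\<in>cells n L. cell_prob k L b) = 1"
  using cell_mass_cell_prob[of L k "\<lambda>_. True"] sum_w by (simp add: cell_mass_def prob_space)

lemma cell_prob_bounded: "cell_prob k L b \<in> {0..1}"
proof (cases "b \<in> cells n L")
  case True
  then show ?thesis using sum_cell_prob member_le_sum[of b "cells n L" "cell_prob k L"]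
    cell_prob_nonneg finite_cells by auto
next
  case False
  then have empty: "{\<omega>\<in>space M. cell_at k L j \<omega> = b} = {}" if "j \<in> J k" for j
    using cell_at_in_cells[OF that] by auto
  have "cell_prob k L b = 0" unfolding cell_prob_def by (intro sum.neutral) (simp add: empty)
  then show ?thesis by simp
qed

lemma cell_prob_coarsen:
  assumes "a \<in> cells n L"
  shows "cell_prob k L a = (\<Sum>b\<in>{b\<in>cells n (Suc L). coarsen L b = a}. cell_prob k (Suc L) b)"
proof -
  have "(\<Sum>b\<in>{b\<in>cells n (Suc L). coarsen L b = a}. cell_prob k (Suc L) b) =
      cell_mass n (Suc L) (cell_prob k (Suc L)) (\<lambda>b. coarsen L b = a)"
    using finite_cells by (simp add: cell_mass_def sum.inter_filter)
  also have "\<dots> = cell_prob k L a"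
    unfolding cell_mass_cell_prob cell_prob_def cell_at_def coarsen_cell_of ..
  finally show ?thesis by simp
qed

definition diag :: "nat \<Rightarrow> nat" where
  "diag = (SOME r. strict_mono r \<and> (\<forall>Lb. convergent (\<lambda>k. cell_prob (r k) (fst Lb) (snd Lb))))"

lemma strict_mono_diag: "strict_mono diag"
  and convergent_cell_prob_diag: "convergent (\<lambda>k. cell_prob (diag k) L b)"
proof -
  have "\<exists>r. strict_mono r \<and> (\<forall>Lb. convergent (\<lambda>k. cell_prob (r k) (fst Lb) (snd Lb)))"
    using cell_prob_bounded
      by (intro bounded_family_convergent_subseq) (auto intro!: boundedI[of _ 1])
  then have "strict_mono diag \<and> (\<forall>Lb. convergent (\<lambda>k. cell_prob (diag k) (fst Lb) (snd Lb)))"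
    unfolding diag_def by (rule someI_ex)
  then show "strict_mono diag" "convergent (\<lambda>k. cell_prob (diag k) L b)"
    by (auto dest: spec[of _ "(L, b)"])
qed

definition lim_prob :: "nat \<Rightarrow> cell \<Rightarrow> real" where
  "lim_prob L b = lim (\<lambda>k. cell_prob (diag k) L b)"

lemma cell_prob_diag_LIMSEQ: "(\<lambda>k. cell_prob (diag k) L b) \<longlonglongrightarrow> lim_prob L b"
  unfolding lim_prob_def using convergent_cell_prob_diag by (simp add: convergent_LIMSEQ_iff)

lemma cell_mass_diag_LIMSEQ:
  "(\<lambda>k. cell_mass n L (cell_prob (diag k) L) \<phi>) \<longlonglongrightarrow> cell_mass n L (lim_prob L) \<phi>"
  by (intro tendsto_cell_mass cell_prob_diag_LIMSEQ)

lemma lim_prob_nonneg: "0 \<le> lim_prob L b"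
  using cell_prob_nonneg by (intro LIMSEQ_le_const[OF cell_prob_diag_LIMSEQ]) auto

lemma sum_lim_prob: "(\<Sum>b\<in>cells n L. lim_prob L b) = 1"
proof -
  have "(\<lambda>k. \<Sum>b\<in>cells n L. cell_prob (diag k) L b) \<longlonglongrightarrow> (\<Sum>b\<in>cells n L. lim_prob L b)"
    by (intro tendsto_sum cell_prob_diag_LIMSEQ)
  then show ?thesis using LIMSEQ_unique[OF _ tendsto_const[of 1]] by (simp add: sum_cell_prob)
qed

lemma lim_prob_coarsen:
  assumes "a \<in> cells n L"
  shows "lim_prob L a = (\<Sum>b\<in>{b\<in>cells n (Suc L). coarsen L b = a}. lim_prob (Suc L) b)"
proof -
  have "(\<lambda>k. \<Sum>b\<in>{b\<in>cells n (Suc L). coarsen L b = a}. cell_prob (diag k) (Suc L) b)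
      \<longlonglongrightarrow> (\<Sum>b\<in>{b\<in>cells n (Suc L). coarsen L b = a}. lim_prob (Suc L) b)"
    by (intro tendsto_sum cell_prob_diag_LIMSEQ)
  then show ?thesis
    using LIMSEQ_unique[OF cell_prob_diag_LIMSEQ] by (simp add: cell_prob_coarsen[OF assms])
qed

definition part :: "nat \<Rightarrow> cell \<Rightarrow> 'a set" where
  "part = (SOME A. \<forall>L. partition_with_measures M (space M) (cells n L) (lim_prob L) (A L) \<and>
     (\<forall>b\<in>cells n (Suc L). A (Suc L) b \<subseteq> A L (coarsen L b)))"

lemma part_sets: "b \<in> cells n L \<Longrightarrow> part L b \<in> sets M"
  and measure_part: "b \<in> cells n L \<Longrightarrow> measure M (part L b) = lim_prob L b"
  and disjoint_part: "disjoint_family_on (part L) (cells n L)"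
  and Union_part: "(\<Union>b\<in>cells n L. part L b) = space M"
  and part_Suc_subset: "b \<in> cells n (Suc L) \<Longrightarrow> part (Suc L) b \<subseteq> part L (coarsen L b)"
proof -
  have "\<exists>A. \<forall>L. partition_with_measures M (space M) (cells n L) (lim_prob L) (A L) \<and>
     (\<forall>b\<in>cells n (Suc L). A (Suc L) b \<subseteq> A L (coarsen L b))"
    by (rule atomless_nested_partitions[of "cells n" lim_prob coarsen, OF atomless finite_cells
        lim_prob_nonneg sum_lim_prob coarsen_in_cells coarsen_surj lim_prob_coarsen])
  from someI_ex[OF this, folded part_def]
  show "b \<in> cells n L \<Longrightarrow> part L b \<in> sets M" "b \<in> cells n L \<Longrightarrow> measure M (part L b) = lim_prob L b"
    "disjoint_family_on (part L) (cells n L)" "(\<Union>b\<in>cells n L. part L b) = space M"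
    "b \<in> cells n (Suc L) \<Longrightarrow> part (Suc L) b \<subseteq> part L (coarsen L b)"
    unfolding partition_with_measures_def by blast+
qed

definition cell_rv :: "nat \<Rightarrow> 'a \<Rightarrow> cell" where
  "cell_rv L \<omega> = (THE b. b \<in> cells n L \<and> \<omega> \<in> part L b)"

lemma cell_rv_eq: "b \<in> cells n L \<Longrightarrow> \<omega> \<in> part L b \<Longrightarrow> cell_rv L \<omega> = b"
  unfolding cell_rv_def using disjoint_part[of L]
    by (intro the_equality) (auto simp: disjoint_family_on_def)

lemma cell_rv_in_cells: "\<omega> \<in> space M \<Longrightarrow> cell_rv L \<omega> \<in> cells n L"
  and in_part_cell_rv: "\<omega> \<in> space M \<Longrightarrow> \<omega> \<in> part L (cell_rv L \<omega>)"
  using Union_part[of L] cell_rv_eq by auto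

lemma cell_rv_vimage: "b \<in> cells n L \<Longrightarrow> {\<omega>\<in>space M. cell_rv L \<omega> = b} = part L b"
  using part_sets[THEN sets.sets_into_space] cell_rv_eq in_part_cell_rv by blast

lemma cell_rv_coarsen: "\<omega> \<in> space M \<Longrightarrow> cell_rv L \<omega> = coarsen L (cell_rv (Suc L) \<omega>)"
proof -
  assume "\<omega> \<in> space M"
  then have "\<omega> \<in> part L (coarsen L (cell_rv (Suc L) \<omega>))"
    using part_Suc_subset[OF cell_rv_in_cells] in_part_cell_rv by blast
  then show ?thesis using cell_rv_eq coarsen_in_cells cell_rv_in_cells \<open>\<omega> \<in> space M\<close> by blast
qed

lemma cell_rv_event: "{\<omega>\<in>space M. cell_rv L \<omega> = b} \<in> sets M"
proof (cases "b \<in> cells n L")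
  case False
  then have "{\<omega>\<in>space M. cell_rv L \<omega> = b} = {}" using cell_rv_in_cells by auto
  then show ?thesis by (metis sets.empty_sets)
qed (simp add: cell_rv_vimage part_sets)

lemma measure_cell_rv: "measure M {\<omega>\<in>space M. \<phi> (cell_rv L \<omega>)} = cell_mass n L (lim_prob L) \<phi>"
proof -
  have "measure M {\<omega>\<in>space M. \<phi> (cell_rv L \<omega>)} =
      (\<Sum>b\<in>cells n L. if \<phi> b then measure M {\<omega>\<in>space M. cell_rv L \<omega> = b} else 0)"
    by (rule measure_pred_finite_range[OF finite_cells cell_rv_in_cells cell_rv_event])
  then show ?thesis
    unfolding cell_mass_def by (auto simp: cell_rv_vimage measure_part intro!: sum.cong)
qed

lemma cell_rv_pred_event: "{\<omega>\<in>space M. \<phi> (cell_rv L \<omega>)} \<in> sets M"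
proof -
  have "{\<omega>\<in>space M. \<phi> (cell_rv L \<omega>)} = (\<Union>b\<in>{b\<in>cells n L. \<phi> b}. {\<omega>\<in>space M. cell_rv L \<omega> = b})"
    using cell_rv_in_cells by auto
  then show ?thesis using cell_rv_event finite_cells by auto
qed

lemma cell_rv_comp_measurable: "(\<lambda>\<omega>. g (cell_rv L \<omega>) :: real) \<in> borel_measurable M"
proof -
  have "(\<lambda>\<omega>. \<Sum>b\<in>cells n L. g b * indicator {\<omega>\<in>space M. cell_rv L \<omega> = b} \<omega>) \<in> borel_measurable M"
    using cell_rv_event by measurable
  moreover have "g (cell_rv L \<omega>) = (\<Sum>b\<in>cells n L. g b * indicator {\<omega>\<in>space M. cell_rv L \<omega> = b} \<omega>)"
    if "\<omega> \<in> space M" for \<omega>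
    using that cell_rv_in_cells[OF that] finite_cells
    by (simp add: indicator_def if_distrib[of "(*) _"] sum.delta' cong: if_cong)
  ultimately show ?thesis by (subst measurable_cong) auto
qed

definition window_event :: "nat \<Rightarrow> 'a set" where
  "window_event L = {\<omega>\<in>space M. cell_rv L \<omega> \<noteq> None}"

lemma window_event_sets: "window_event L \<in> sets M"
  unfolding window_event_def by (rule cell_rv_pred_event)

lemma window_event_mono: "window_event L \<subseteq> window_event (Suc L)"
proof
  fix \<omega> assume \<omega>: "\<omega> \<in> window_event L"
  then have "coarsen L (cell_rv (Suc L) \<omega>) \<noteq> None"
    unfolding window_event_def using cell_rv_coarsen[of \<omega> L] by simp
  then have "cell_rv (Suc L) \<omega> \<noteq> None" by (metis coarsen_None)
  then show "\<omega> \<in> window_event (Suc L)" using \<omega> unfolding window_event_def by blast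
qed

lemma measure_window_event: "measure M (window_event L) = 1 - lim_prob L None"
proof -
  have "measure M (window_event L) = cell_mass n L (lim_prob L) (\<lambda>b. b \<noteq> None)"
    unfolding window_event_def by (rule measure_cell_rv)
  also have "\<dots> = (\<Sum>b\<in>cells n L - {None}. lim_prob L b)"
  proof -
    have "{b\<in>cells n L. b \<noteq> None} = cells n L - {None}" by auto
    then show ?thesis
      unfolding cell_mass_def by (metis (no_types) sum.inter_filter[OF finite_cells])
  qed
  also have "\<dots> = (\<Sum>b\<in>cells n L. lim_prob L b) - lim_prob L None"
    using finite_cells by (simp add: sum_diff1 cells_def)
  finally show ?thesis using sum_lim_prob by simp
qed

definition Y_approx :: "nat \<Rightarrow> nat \<Rightarrow> 'a \<Rightarrow> real" where
  "Y_approx L i \<omega> = cell_value L i (cell_rv L \<omega>)"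

definition Y :: "nat \<Rightarrow> 'a \<Rightarrow> real" where
  "Y i \<omega> = lim (\<lambda>L. Y_approx L i \<omega>)"

lemma Y_approx_mono:
  assumes "\<omega> \<in> window_event L" and "i < n"
  shows "Y_approx L i \<omega> \<le> Y_approx (Suc L) i \<omega>"
    and "Y_approx (Suc L) i \<omega> \<le> Y_approx L i \<omega> + 1 / 2^L"
proof -
  have \<omega>: "\<omega> \<in> space M" "cell_rv L \<omega> \<noteq> None" using assms(1) unfolding window_event_def by auto
  have eq: "coarsen L (cell_rv (Suc L) \<omega>) = cell_rv L \<omega>"
    by (rule cell_rv_coarsen[OF \<omega>(1), symmetric])
  then have "coarsen L (cell_rv (Suc L) \<omega>) \<noteq> None" using \<omega>(2) by simp
  note cv = cell_value_coarsen[OF cell_rv_in_cells[OF \<omega>(1)] this assms(2), unfolded eq]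
  show "Y_approx L i \<omega> \<le> Y_approx (Suc L) i \<omega>" unfolding Y_approx_def by (rule cv(1))
  show "Y_approx (Suc L) i \<omega> \<le> Y_approx L i \<omega> + 1 / 2^L" unfolding Y_approx_def by (rule cv(2))
qed

lemma window_event_mono_add: "\<omega> \<in> window_event L \<Longrightarrow> \<omega> \<in> window_event (m + L)"
  by (induction m) (use window_event_mono in auto)

lemma Y_approx_LIMSEQ:
  assumes "\<omega> \<in> space M" and "i < n"
  shows "(\<lambda>L. Y_approx L i \<omega>) \<longlonglongrightarrow> Y i \<omega>"
proof -
  have "convergent (\<lambda>L. Y_approx L i \<omega>)"
  proof (cases "\<exists>L0. \<omega> \<in> window_event L0")
    case True
    then obtain L0 where L0: "\<omega> \<in> window_event L0" by auto
    have "Y_approx (Suc m + L0) i \<omega> \<le> Y_approx (m + L0) i \<omega> + 1 / 2^m" for m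
    proof -
      have "(1::real) / 2^(m + L0) \<le> 1 / 2^m" by (intro divide_left_mono power_increasing) auto
      then show ?thesis using Y_approx_mono(2)[OF window_event_mono_add[OF L0] assms(2), of m]
        by simp
    qed
    then have "convergent (\<lambda>m. Y_approx (m + L0) i \<omega>)"
      using Y_approx_mono(1)[OF window_event_mono_add[OF L0] assms(2)]
      by (intro convergent_increments_le_power_2) auto
    then obtain l where "(\<lambda>m. Y_approx (m + L0) i \<omega>) \<longlonglongrightarrow> l" by (auto simp: convergent_def)
    then have "(\<lambda>L. Y_approx L i \<omega>) \<longlonglongrightarrow> l" by (rule LIMSEQ_offset)
    then show ?thesis by (auto simp: convergent_def)
  next
    case False
    then have "cell_rv L \<omega> = None" for L using assms(1) unfolding window_event_def by blast
    then have "(\<lambda>L. Y_approx L i \<omega>) = (\<lambda>L. 0)" unfolding Y_approx_def cell_value_def by simp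
    then show ?thesis by (simp add: convergent_const)
  qed
  then show ?thesis unfolding Y_def by (simp add: convergent_LIMSEQ_iff)
qed

lemma Y_approx_measurable: "Y_approx L i \<in> borel_measurable M"
  unfolding Y_approx_def by (rule cell_rv_comp_measurable)

lemma Y_measurable: "i < n \<Longrightarrow> Y i \<in> borel_measurable M"
  by (rule borel_measurable_LIMSEQ_real[OF Y_approx_LIMSEQ Y_approx_measurable])

lemma tendsto_cell_cdf_lim_prob:
  fixes v :: "nat \<Rightarrow> cell \<Rightarrow> real" and W :: "'a \<Rightarrow> real"
  assumes tight: "(\<lambda>L. lim_prob L None) \<longlonglongrightarrow> 0"
    and mono: "\<And>L \<omega>. \<omega> \<in> window_event L \<Longrightarrow> v L (cell_rv L \<omega>) \<le> v (Suc L) (cell_rv (Suc L) \<omega>)"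
    and lim: "\<And>\<omega>. \<omega> \<in> space M \<Longrightarrow> (\<lambda>L. v L (cell_rv L \<omega>)) \<longlonglongrightarrow> W \<omega>"
  shows "(\<lambda>L. cell_cdf n L (lim_prob L) (v L) t) \<longlonglongrightarrow> rv_cdf M W t"
proof -
  have "(\<lambda>L. measure M (window_event L)) \<longlonglongrightarrow> 1"
    unfolding measure_window_event using tendsto_diff[OF tendsto_const[of 1] tight] by simp
  moreover have "W \<in> borel_measurable M"
    using lim cell_rv_comp_measurable by (rule borel_measurable_LIMSEQ_real)
  ultimately have "(\<lambda>L. measure M ((space M - window_event L) \<union> {\<omega>\<in>space M. v L (cell_rv L \<omega>) \<le> t}))
      \<longlonglongrightarrow> measure M {\<omega>\<in>space M. W \<omega> \<le> t}"
    using window_event_sets window_event_mono cell_rv_comp_measurable mono lim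
    by (intro tendsto_measure_le_of_increasing_approx) auto
  moreover have "measure M ((space M - window_event L) \<union> {\<omega>\<in>space M. v L (cell_rv L \<omega>) \<le> t}) =
      cell_cdf n L (lim_prob L) (v L) t" for L
  proof -
    have "(space M - window_event L) \<union> {\<omega>\<in>space M. v L (cell_rv L \<omega>) \<le> t} =
        {\<omega>\<in>space M. cell_rv L \<omega> = None \<or> v L (cell_rv L \<omega>) \<le> t}"
      unfolding window_event_def by auto
    then show ?thesis using measure_cell_rv[of "\<lambda>b. b = None \<or> v L b \<le> t" L]
      unfolding cell_cdf_def by simp
  qed
  ultimately show ?thesis unfolding rv_cdf_def by simp
qed

lemma measure_X_add_le: "i < n \<Longrightarrow> measure M {\<omega>\<in>space M. X i \<omega> + c \<le> t} = F i (t - c)"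
  using rv_cdf_X[of i] unfolding rv_cdf_def
    by (auto simp: fun_eq_iff algebra_simps elim!: allE[of _ "t - c"])

lemma cell_value_cell_at:
  assumes "j \<in> J k" and "cell_at k L j \<omega> \<noteq> None" and "i < n"
  shows "cell_value L i (cell_at k L j \<omega>) \<le> X (\<pi> k j i) \<omega> + shift k j i"
    and "X (\<pi> k j i) \<omega> + shift k j i \<le> cell_value L i (cell_at k L j \<omega>) + 2 / 2^L"
proof -
  have eq: "cell_value L i (cell_at k L j \<omega>) =
      of_int (dyadic_floor L (X (\<pi> k j i) \<omega>)) / 2^L + of_int (dyadic_floor L (shift k j i)) / 2^L"
    using cell_value_cell_of[OF assms(2)[unfolded cell_at_def] assms(3) \<pi>_less[OF assms(1,3)]]
    unfolding cell_at_def by (simp add: add_divide_distrib)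
  show "cell_value L i (cell_at k L j \<omega>) \<le> X (\<pi> k j i) \<omega> + shift k j i"
    unfolding eq using dyadic_floor_le[of L "X (\<pi> k j i) \<omega>"] dyadic_floor_le[of L "shift k j i"]
      by linarith
  show "X (\<pi> k j i) \<omega> + shift k j i \<le> cell_value L i (cell_at k L j \<omega>) + 2 / 2^L"
    unfolding eq
      using less_dyadic_floor_add[of "X (\<pi> k j i) \<omega>" L] less_dyadic_floor_add[of "shift k j i" L]
    by (simp add: field_simps)
qed

lemma sum_X_\<pi>_add_shift: "j \<in> J k \<Longrightarrow> (\<Sum>i<n. X (\<pi> k j i) \<omega> + shift k j i) = (\<Sum>i<n. X i \<omega>)"
  using sum.permute[OF \<pi>_permutes, of j k "\<lambda>i. X i \<omega>"] sum_shift by (simp add: sum.distrib comp_def)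

lemma cell_cdf_cell_prob_bounds:
  fixes Z :: "'j \<Rightarrow> 'a \<Rightarrow> real" and v :: "cell \<Rightarrow> real"
  assumes Z_measurable: "\<And>j. j \<in> J k \<Longrightarrow> Z j \<in> borel_measurable M"
    and approx: "\<And>j \<omega>. j \<in> J k \<Longrightarrow> cell_at k L j \<omega> \<noteq> None \<Longrightarrow>
      v (cell_at k L j \<omega>) \<le> Z j \<omega> \<and> Z j \<omega> \<le> v (cell_at k L j \<omega>) + \<delta>"
  shows "(\<Sum>j\<in>J k. w k j * measure M {\<omega>\<in>space M. Z j \<omega> \<le> t}) \<le> cell_cdf n L (cell_prob k L) v t"
    and "cell_cdf n L (cell_prob k L) v t \<le>
      cell_prob k L None + (\<Sum>j\<in>J k. w k j * measure M {\<omega>\<in>space M. Z j \<omega> \<le> t + \<delta>})"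
proof -
  have cdf_eq: "cell_cdf n L (cell_prob k L) v t = (\<Sum>j\<in>J k. w k j *
      measure M {\<omega>\<in>space M. cell_at k L j \<omega> = None \<or> v (cell_at k L j \<omega>) \<le> t})"
    unfolding cell_cdf_def by (rule cell_mass_cell_prob)
  show "(\<Sum>j\<in>J k. w k j * measure M {\<omega>\<in>space M. Z j \<omega> \<le> t}) \<le> cell_cdf n L (cell_prob k L) v t"
    unfolding cdf_eq using approx
    by (intro sum_mono mult_left_mono w_nonneg finite_measure_mono cell_at_pred_event)
      (force intro: order_trans)+
  have "measure M {\<omega>\<in>space M. cell_at k L j \<omega> = None \<or> v (cell_at k L j \<omega>) \<le> t} \<le>
      measure M {\<omega>\<in>space M. cell_at k L j \<omega> = None} + measure M {\<omega>\<in>space M. Z j \<omega> \<le> t + \<delta>}"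
    if j: "j \<in> J k" for j
  proof -
    have "{\<omega>\<in>space M. cell_at k L j \<omega> = None \<or> v (cell_at k L j \<omega>) \<le> t} \<subseteq>
        {\<omega>\<in>space M. cell_at k L j \<omega> = None} \<union> {\<omega>\<in>space M. Z j \<omega> \<le> t + \<delta>}"
    proof
      fix \<omega> assume "\<omega> \<in> {\<omega>\<in>space M. cell_at k L j \<omega> = None \<or> v (cell_at k L j \<omega>) \<le> t}"
      then show "\<omega> \<in> {\<omega>\<in>space M. cell_at k L j \<omega> = None} \<union> {\<omega>\<in>space M. Z j \<omega> \<le> t + \<delta>}"
        using approx[OF j, of \<omega>] by (cases "cell_at k L j \<omega> = None") auto
    qed
    moreover have "{\<omega>\<in>space M. Z j \<omega> \<le> t + \<delta>} \<in> sets M" using Z_measurable[OF j] by measurable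
    ultimately show ?thesis
      using cell_at_event by (blast intro: order_trans[OF finite_measure_mono measure_Un_le])
  qed
  then have "cell_cdf n L (cell_prob k L) v t \<le> (\<Sum>j\<in>J k. w k j *
      (measure M {\<omega>\<in>space M. cell_at k L j \<omega> = None} + measure M {\<omega>\<in>space M. Z j \<omega> \<le> t + \<delta>}))"
    unfolding cdf_eq by (intro sum_mono mult_left_mono w_nonneg)
  then show "cell_cdf n L (cell_prob k L) v t \<le>
      cell_prob k L None + (\<Sum>j\<in>J k. w k j * measure M {\<omega>\<in>space M. Z j \<omega> \<le> t + \<delta>})"
    by (simp add: cell_prob_def distrib_left sum.distrib)
qed

lemma Gk_le_cell_cdf: "i < n \<Longrightarrow> Gk k i t \<le> cell_cdf n L (cell_prob k L) (cell_value L i) t"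
  and cell_cdf_le_Gk: "i < n \<Longrightarrow> cell_cdf n L (cell_prob k L) (cell_value L i) t \<le>
    cell_prob k L None + Gk k i (t + 2 / 2^L)"
proof -
  assume i: "i < n"
  have "Gk k i x = (\<Sum>j\<in>J k. w k j * measure M {\<omega>\<in>space M. X (\<pi> k j i) \<omega> + shift k j i \<le> x})" for x
    unfolding Gk_def using measure_X_add_le[OF \<pi>_less[OF _ i]] by simp
  moreover note cell_cdf_cell_prob_bounds[where Z = "\<lambda>j \<omega>. X (\<pi> k j i) \<omega> + shift k j i"
      and \<delta> = "2 / 2^L", OF _ conjI[OF cell_value_cell_at[OF _ _ i]]]
  ultimately show "Gk k i t \<le> cell_cdf n L (cell_prob k L) (cell_value L i) t"
    and "cell_cdf n L (cell_prob k L) (cell_value L i) t \<le>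
      cell_prob k L None + Gk k i (t + 2 / 2^L)"
    using X_measurable \<pi>_less i by auto
qed

lemma rv_cdf_sum_X_le_cell_cdf: "rv_cdf M (\<lambda>\<omega>. \<Sum>i<n. X i \<omega>) t \<le>
    cell_cdf n L (cell_prob k L) (\<lambda>b. \<Sum>i<n. cell_value L i b) t"
  and cell_cdf_le_rv_cdf_sum_X: "cell_cdf n L (cell_prob k L) (\<lambda>b. \<Sum>i<n. cell_value L i b) t \<le>
    cell_prob k L None + rv_cdf M (\<lambda>\<omega>. \<Sum>i<n. X i \<omega>) (t + 2 * n / 2^L)"
proof -
  have approx: "(\<Sum>i<n. cell_value L i (cell_at k L j \<omega>)) \<le> (\<Sum>i<n. X i \<omega>) \<and>
      (\<Sum>i<n. X i \<omega>) \<le> (\<Sum>i<n. cell_value L i (cell_at k L j \<omega>)) + 2 * n / 2^L"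
    if "j \<in> J k" "cell_at k L j \<omega> \<noteq> None" for j \<omega>
  proof -
    have "(\<Sum>i<n. cell_value L i (cell_at k L j \<omega>)) \<le> (\<Sum>i<n. X (\<pi> k j i) \<omega> + shift k j i)"
      using cell_value_cell_at(1)[OF that] by (intro sum_mono) auto
    moreover have "(\<Sum>i<n. X (\<pi> k j i) \<omega> + shift k j i) \<le>
        (\<Sum>i<n. cell_value L i (cell_at k L j \<omega>) + 2 / 2^L)"
      using cell_value_cell_at(2)[OF that] by (intro sum_mono) auto
    ultimately show ?thesis using sum_X_\<pi>_add_shift[OF that(1)]
      by (simp add: sum.distrib mult.commute)
  qed
  have "rv_cdf M (\<lambda>\<omega>. \<Sum>i<n. X i \<omega>) x =
      (\<Sum>j\<in>J k. w k j * measure M {\<omega>\<in>space M. (\<Sum>i<n. X i \<omega>) \<le> x})" for x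
    using sum_w by (simp add: rv_cdf_def sum_distrib_right[symmetric])
  moreover have "(\<lambda>\<omega>. \<Sum>i<n. X i \<omega>) \<in> borel_measurable M" using X_measurable by measurable
  ultimately show "rv_cdf M (\<lambda>\<omega>. \<Sum>i<n. X i \<omega>) t \<le>
      cell_cdf n L (cell_prob k L) (\<lambda>b. \<Sum>i<n. cell_value L i b) t"
    and "cell_cdf n L (cell_prob k L) (\<lambda>b. \<Sum>i<n. cell_value L i b) t \<le>
      cell_prob k L None + rv_cdf M (\<lambda>\<omega>. \<Sum>i<n. X i \<omega>) (t + 2 * n / 2^L)"
    using cell_cdf_cell_prob_bounds[where Z = "\<lambda>j \<omega>. \<Sum>i<n. X i \<omega>", OF _ approx] by auto
qed

lemma mono_Gk: "mono (Gk k i)" if "i < n"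
  unfolding Gk_def using that
  by (intro monoI sum_mono mult_left_mono w_nonneg is_cdf_mono[OF F_cdf] \<pi>_less) auto

lemma Gk_diag_LIMSEQ: "i < n \<Longrightarrow> isCont (G i) x \<Longrightarrow> (\<lambda>k. Gk (diag k) i x) \<longlonglongrightarrow> G i x"
  using LIMSEQ_subseq_LIMSEQ[OF _ strict_mono_diag, of "\<lambda>k. Gk k i x"] weak_conv_G
  unfolding weak_conv_def Gk_def by (auto simp: comp_def)

definition X_outside_prob :: "nat \<Rightarrow> real" where
  "X_outside_prob L = measure M {\<omega>\<in>space M. \<not> (\<forall>i<n. in_window L (X i \<omega>))}"

lemma X_outside_prob_LIMSEQ: "X_outside_prob \<longlonglongrightarrow> 0"
proof -
  define B where "B L = {\<omega>\<in>space M. \<forall>i<n. in_window L (X i \<omega>)}" for L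
  have B_sets: "B L \<in> sets M" for L unfolding B_def in_window_def using X_measurable by measurable
  have "space M \<subseteq> (\<Union>L. B L)"
  proof
    fix \<omega> assume \<omega>: "\<omega> \<in> space M"
    obtain L :: nat where L: "(\<Sum>i<n. \<bar>X i \<omega>\<bar>) < real L" using reals_Archimedean2 by blast
    have "\<bar>X i \<omega>\<bar> \<le> (\<Sum>i<n. \<bar>X i \<omega>\<bar>)" if "i < n" for i
      using that by (intro member_le_sum) auto
    then have "\<forall>i<n. in_window L (X i \<omega>)" using L unfolding in_window_def by fastforce
    then show "\<omega> \<in> (\<Union>L. B L)" using \<omega> unfolding B_def by auto
  qed
  then have "(\<Union>L. B L) = space M" unfolding B_def by auto
  moreover have "incseq B" unfolding B_def by (rule incseq_SucI) (auto intro: in_window_Suc)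
  ultimately have "(\<lambda>L. measure M (B L)) \<longlonglongrightarrow> 1"
    using finite_Lim_measure_incseq[of B] B_sets prob_space by auto
  moreover have "X_outside_prob = (\<lambda>L. 1 - measure M (B L))"
  proof
    fix L
    have "{\<omega>\<in>space M. \<not> (\<forall>i<n. in_window L (X i \<omega>))} = space M - B L" unfolding B_def by auto
    then show "X_outside_prob L = 1 - measure M (B L)"
      unfolding X_outside_prob_def using prob_compl[OF B_sets] by simp
  qed
  ultimately show ?thesis using tendsto_diff[OF tendsto_const[of 1], of "\<lambda>L. measure M (B L)" 1]
    by simp
qed

definition F_tails :: "real \<Rightarrow> nat \<Rightarrow> real" where
  "F_tails s L = (\<Sum>i<n. F i (s - real L) + (1 - F i (real L - s)))"

lemma F_tails_LIMSEQ: "F_tails s \<longlonglongrightarrow> 0"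
proof -
  have "(\<lambda>L. F i (s - real L) + (1 - F i (real L - s))) \<longlonglongrightarrow> 0 + (1 - 1)" if i: "i < n" for i
    by (intro tendsto_add tendsto_diff tendsto_const
        filterlim_compose[OF is_cdf_at_bot[OF F_cdf[OF i]] filterlim_minus_of_nat_at_bot]
        filterlim_compose[OF is_cdf_at_top[OF F_cdf[OF i]] filterlim_of_nat_minus_at_top])
  then have "F_tails s \<longlonglongrightarrow> (\<Sum>i<n. 0)" unfolding F_tails_def by (intro tendsto_sum) auto
  then show ?thesis by simp
qed

lemma F_tails_ge:
  assumes "i < n"
  shows "F i (s - real L) \<le> F_tails s L" and "1 - F i (real L - s) \<le> F_tails s L"
proof -
  have nonneg: "0 \<le> F i (s - real L)" "0 \<le> 1 - F i (real L - s)" if "i < n" for i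
    using is_cdf_bounded[OF F_cdf[OF that]] by auto
  have "F i (s - real L) + (1 - F i (real L - s)) \<le> F_tails s L"
    unfolding F_tails_def using assms nonneg
    by (intro member_le_sum[of i "{..<n}" "\<lambda>i. F i (s - real L) + (1 - F i (real L - s))"]) auto
  then show "F i (s - real L) \<le> F_tails s L" and "1 - F i (real L - s) \<le> F_tails s L"
    using nonneg[OF assms] by linarith+
qed

text \<open>A shift c outside the window [-L, L) moves the mass of F p beyond \<plusminus>s, up to the tails
  of the F i at distance L - s.\<close>

lemma shift_outside_window_le:
  assumes p: "p < n"
  shows "(1 - F_tails s L) * (if in_window L c then 0 else 1) \<le> 1 - F p (s - c) + F p (- s - c)"
proof -
  have F01: "0 \<le> F p x" "F p x \<le> 1" for x using is_cdf_bounded[OF F_cdf[OF p]] by auto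
  show ?thesis
  proof (cases "in_window L c")
    case True
    then show ?thesis using F01[of "s - c"] F01[of "- s - c"] by simp
  next
    case False
    then consider "c < - real L" | "real L \<le> c" unfolding in_window_def by linarith
    then show ?thesis
    proof cases
      case 1
      then have "F p (real L - s) \<le> F p (- s - c)" by (intro is_cdf_mono[OF F_cdf[OF p]]) auto
      then show ?thesis using F_tails_ge(2)[OF p, where s = s and L = L] F01[of "s - c"] False
        by simp
    next
      case 2
      then have "F p (s - c) \<le> F p (s - real L)" by (intro is_cdf_mono[OF F_cdf[OF p]]) auto
      then show ?thesis using F_tails_ge(1)[OF p, where s = s and L = L] F01[of "- s - c"] False
        by simp
    qed
  qed
qed

definition outside_weight :: "nat \<Rightarrow> nat \<Rightarrow> nat \<Rightarrow> real" where
  "outside_weight k L i = (\<Sum>j\<in>J k. w k j * (if in_window L (shift k j i) then 0 else 1))"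

lemma cell_prob_None_le: "cell_prob k L None \<le> X_outside_prob L + (\<Sum>i<n. outside_weight k L i)"
proof -
  have "measure M {\<omega>\<in>space M. cell_at k L j \<omega> = None} \<le>
      X_outside_prob L + (\<Sum>i<n. if in_window L (shift k j i) then 0 else 1)" for j
  proof (cases "\<forall>i<n. in_window L (shift k j i)")
    case True
    have "{\<omega>\<in>space M. cell_at k L j \<omega> = None} \<subseteq> {\<omega>\<in>space M. \<not> (\<forall>i<n. in_window L (X i \<omega>))}"
      unfolding cell_at_def cell_of_eq_None using True by blast
    moreover have "{\<omega>\<in>space M. \<not> (\<forall>i<n. in_window L (X i \<omega>))} \<in> sets M"
      unfolding in_window_def using X_measurable by measurable
    ultimately have "measure M {\<omega>\<in>space M. cell_at k L j \<omega> = None} \<le> X_outside_prob L"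
      unfolding X_outside_prob_def by (rule finite_measure_mono)
    moreover have "0 \<le> (\<Sum>i<n. if in_window L (shift k j i) then 0 else 1::real)"
      by (intro sum_nonneg) auto
    ultimately show ?thesis by linarith
  next
    case False
    then obtain i where i: "i < n" "\<not> in_window L (shift k j i)" by auto
    have "1 \<le> (\<Sum>i<n. if in_window L (shift k j i) then 0 else 1::real)"
      using i member_le_sum[of i "{..<n}" "\<lambda>i. if in_window L (shift k j i) then 0 else 1::real"]
      by auto
    moreover have "0 \<le> X_outside_prob L" unfolding X_outside_prob_def by simp
    ultimately show ?thesis using prob_le_1 by (smt (verit))
  qed
  then have "cell_prob k L None \<le>
      (\<Sum>j\<in>J k. w k j * (X_outside_prob L + (\<Sum>i<n. if in_window L (shift k j i) then 0 else 1)))"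
    unfolding cell_prob_def by (intro sum_mono mult_left_mono w_nonneg)
  also have "\<dots> = X_outside_prob L + (\<Sum>i<n. outside_weight k L i)"
    using sum_w unfolding outside_weight_def
    by (simp add: distrib_left sum.distrib sum_distrib_left sum_distrib_right[symmetric]
        sum.swap[of _ "J k"])
  finally show ?thesis .
qed

lemma outside_weight_le:
  assumes "i < n"
  shows "(1 - F_tails s L) * outside_weight k L i \<le> 1 - Gk k i s + Gk k i (- s)"
proof -
  have "(1 - F_tails s L) * outside_weight k L i =
      (\<Sum>j\<in>J k. w k j * ((1 - F_tails s L) * (if in_window L (shift k j i) then 0 else 1)))"
    unfolding outside_weight_def by (simp add: sum_distrib_left algebra_simps)
  also have "\<dots> \<le>
      (\<Sum>j\<in>J k. w k j * (1 - F (\<pi> k j i) (s - shift k j i) + F (\<pi> k j i) (- s - shift k j i)))"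
    using assms by (intro sum_mono mult_left_mono w_nonneg shift_outside_window_le \<pi>_less) auto
  also have "\<dots> = 1 - Gk k i s + Gk k i (- s)"
    unfolding Gk_def using sum_w
    by (simp add: algebra_simps sum.distrib sum_subtractf sum_distrib_left[symmetric])
  finally show ?thesis .
qed

lemma cell_prob_None_weighted_le:
  assumes "F_tails s L \<le> 1"
  shows "(1 - F_tails s L) * cell_prob k L None \<le>
    X_outside_prob L + (\<Sum>i<n. 1 - Gk k i s + Gk k i (- s))"
proof -
  have "0 \<le> F_tails s L"
    unfolding F_tails_def using is_cdf_bounded[OF F_cdf]
    by (intro sum_nonneg add_nonneg_nonneg) auto
  moreover have "0 \<le> X_outside_prob L" unfolding X_outside_prob_def by simp
  ultimately have "(1 - F_tails s L) * X_outside_prob L \<le> X_outside_prob L"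
    using assms by (intro mult_left_le_one_le) auto
  moreover have "(1 - F_tails s L) * cell_prob k L None \<le>
      (1 - F_tails s L) * (X_outside_prob L + (\<Sum>i<n. outside_weight k L i))"
    using assms by (intro mult_left_mono cell_prob_None_le) auto
  ultimately have "(1 - F_tails s L) * cell_prob k L None \<le>
      X_outside_prob L + (\<Sum>i<n. (1 - F_tails s L) * outside_weight k L i)"
    by (simp add: distrib_left sum_distrib_left)
  also have "\<dots> \<le> X_outside_prob L + (\<Sum>i<n. 1 - Gk k i s + Gk k i (- s))"
    by (intro add_left_mono sum_mono outside_weight_le) auto
  finally show ?thesis .
qed

definition G_tails :: "real \<Rightarrow> real" where
  "G_tails s = (\<Sum>i<n. 1 - G i s + G i (- s))"

lemma G_tails_at_top: "(G_tails \<longlongrightarrow> 0) at_top"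
proof -
  have "((\<lambda>s. 1 - G i s + G i (- s)) \<longlongrightarrow> 1 - 1 + 0) at_top" if i: "i < n" for i
    using is_cdf_at_top[OF G_cdf[OF i]]
      filterlim_compose[OF is_cdf_at_bot[OF G_cdf[OF i]] filterlim_uminus_at_bot_at_top]
    by (intro tendsto_add tendsto_diff tendsto_const) auto
  then have "(G_tails \<longlongrightarrow> (\<Sum>i<n. 0)) at_top" unfolding G_tails_def by (intro tendsto_sum) auto
  then show ?thesis by simp
qed

lemma countable_G_discont: "countable (\<Union>i<n. {x. \<not> isCont (G i) x})"
  using G_cdf unfolding is_cdf_def right_continuous_mono_def by (auto intro!: mono_ctble_discont)

lemma lim_prob_None_le:
  assumes cont: "\<And>i. i < n \<Longrightarrow> isCont (G i) s \<and> isCont (G i) (- s)" and "F_tails s L \<le> 1"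
  shows "(1 - F_tails s L) * lim_prob L None \<le> X_outside_prob L + G_tails s"
  unfolding G_tails_def
proof (rule LIMSEQ_le)
  show "(\<lambda>k. (1 - F_tails s L) * cell_prob (diag k) L None) \<longlonglongrightarrow> (1 - F_tails s L) * lim_prob L None"
    by (intro tendsto_mult_left cell_prob_diag_LIMSEQ)
  show "(\<lambda>k. X_outside_prob L + (\<Sum>i<n. 1 - Gk (diag k) i s + Gk (diag k) i (- s)))
      \<longlonglongrightarrow> X_outside_prob L + (\<Sum>i<n. 1 - G i s + G i (- s))"
    using cont by (intro tendsto_add tendsto_const tendsto_sum tendsto_diff Gk_diag_LIMSEQ) auto
qed (use cell_prob_None_weighted_le[OF assms(2)] in auto)

lemma lim_prob_None_LIMSEQ: "(\<lambda>L. lim_prob L None) \<longlonglongrightarrow> 0"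
proof (rule LIMSEQ_I)
  fix r :: real assume "0 < r"
  then obtain s0 where s0: "\<And>s. s0 \<le> s \<Longrightarrow> G_tails s < r / 4"
    using order_tendstoD(2)[OF G_tails_at_top, of "r / 4"]
      by (auto simp: eventually_at_top_linorder)
  define D where "D = (\<Union>i<n. {x. \<not> isCont (G i) x})"
  have "countable (D \<union> uminus ` D)" using countable_G_discont unfolding D_def by auto
  then obtain s where s: "s \<in> {s0<..<s0 + 1}" "s \<notin> D \<union> uminus ` D"
    using open_minus_countable[of "D \<union> uminus ` D" "{s0<..<s0 + 1}"] by auto
  then have "- s \<notin> D" by (metis UnCI image_eqI minus_minus)
  then have cont: "isCont (G i) s \<and> isCont (G i) (- s)" if "i < n" for i
    using that s(2) unfolding D_def by auto
  obtain N where N: "\<And>L. N \<le> L \<Longrightarrow> F_tails s L < 1/2 \<and> X_outside_prob L < r / 4"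
    using eventually_conj[OF order_tendstoD(2)[OF F_tails_LIMSEQ, of "1/2"]
      order_tendstoD(2)[OF X_outside_prob_LIMSEQ, of "r / 4"]] \<open>0 < r\<close>
    by (auto simp: eventually_sequentially)
  have "lim_prob L None < r" if "N \<le> L" for L
  proof -
    have "(1 - F_tails s L) * lim_prob L None \<le> X_outside_prob L + G_tails s"
      using N[OF that] cont by (intro lim_prob_None_le) auto
    moreover have "1 / 2 * lim_prob L None \<le> (1 - F_tails s L) * lim_prob L None"
      using N[OF that] lim_prob_nonneg[of L None] by (intro mult_right_mono) auto
    ultimately show ?thesis using N[OF that] s0[of s] s(1) by auto
  qed
  then show "\<exists>N. \<forall>L\<ge>N. norm (lim_prob L None - 0) < r" using lim_prob_nonneg by auto
qed

lemma rv_cdf_Y: "i < n \<Longrightarrow> rv_cdf M (Y i) = G i"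
proof
  fix t assume i: "i < n"
  show "rv_cdf M (Y i) t = G i t"
  proof (rule cdf_eq_of_double_limit[where P = "rv_cdf M (Y i)" and H = "G i"
        and C = "{x. \<not> isCont (G i) x}" and Hk = "\<lambda>k. Gk (diag k) i"
        and q = "\<lambda>k L. cell_cdf n L (cell_prob (diag k) L) (cell_value L i)"
        and ql = "\<lambda>L. cell_cdf n L (lim_prob L) (cell_value L i)"
        and e = "\<lambda>k L. cell_prob (diag k) L None" and el = "\<lambda>L. lim_prob L None"
        and \<delta> = "\<lambda>L. 2 / 2^L"])
    show "countable {x. \<not> isCont (G i) x}" "continuous (at_right t) (G i)" "mono (G i)"
      using G_cdf[OF i] unfolding is_cdf_def right_continuous_mono_def
        by (auto intro: mono_ctble_discont)
    show "continuous (at_right t) (rv_cdf M (Y i))"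
      by (rule rv_cdf_continuous_at_right[OF Y_measurable[OF i]])
    show "mono (Gk (diag k) i)" for k by (rule mono_Gk[OF i])
    show "x \<notin> {x. \<not> isCont (G i) x} \<Longrightarrow> (\<lambda>k. Gk (diag k) i x) \<longlonglongrightarrow> G i x" for x
      using Gk_diag_LIMSEQ[OF i] by simp
    show "(\<lambda>k. cell_cdf n L (cell_prob (diag k) L) (cell_value L i) x)
        \<longlonglongrightarrow> cell_cdf n L (lim_prob L) (cell_value L i) x" for L x
      unfolding cell_cdf_def by (rule cell_mass_diag_LIMSEQ)
    show "(\<lambda>L. cell_cdf n L (lim_prob L) (cell_value L i) x) \<longlonglongrightarrow> rv_cdf M (Y i) x" for x
      using Y_approx_mono(1) Y_approx_LIMSEQ i unfolding Y_approx_def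
      by (intro tendsto_cell_cdf_lim_prob[OF lim_prob_None_LIMSEQ]) auto
    show "Gk (diag k) i x \<le> cell_cdf n L (cell_prob (diag k) L) (cell_value L i) x" for k L x
      by (rule Gk_le_cell_cdf[OF i])
    show "cell_cdf n L (cell_prob (diag k) L) (cell_value L i) x \<le>
        cell_prob (diag k) L None + Gk (diag k) i (x + 2 / 2^L)" for k L x
      by (rule cell_cdf_le_Gk[OF i])
  qed (rule cell_prob_diag_LIMSEQ lim_prob_None_LIMSEQ LIMSEQ_divide_power_2)+
qed

lemma rv_cdf_sum_Y: "rv_cdf M (\<lambda>\<omega>. \<Sum>i<n. Y i \<omega>) = rv_cdf M (\<lambda>\<omega>. \<Sum>i<n. X i \<omega>)"
proof
  fix t
  have sum_X: "(\<lambda>\<omega>. \<Sum>i<n. X i \<omega>) \<in> borel_measurable M" using X_measurable by measurable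
  show "rv_cdf M (\<lambda>\<omega>. \<Sum>i<n. Y i \<omega>) t = rv_cdf M (\<lambda>\<omega>. \<Sum>i<n. X i \<omega>) t"
  proof (rule cdf_eq_of_double_limit[where P = "rv_cdf M (\<lambda>\<omega>. \<Sum>i<n. Y i \<omega>)"
        and H = "rv_cdf M (\<lambda>\<omega>. \<Sum>i<n. X i \<omega>)" and C = "{}" and Hk = "\<lambda>k. rv_cdf M (\<lambda>\<omega>. \<Sum>i<n. X i \<omega>)"
        and q = "\<lambda>k L. cell_cdf n L (cell_prob (diag k) L) (\<lambda>b. \<Sum>i<n. cell_value L i b)"
        and ql = "\<lambda>L. cell_cdf n L (lim_prob L) (\<lambda>b. \<Sum>i<n. cell_value L i b)"
        and e = "\<lambda>k L. cell_prob (diag k) L None" and el = "\<lambda>L. lim_prob L None"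
        and \<delta> = "\<lambda>L. 2 * n / 2^L"])
    show "continuous (at_right t) (rv_cdf M (\<lambda>\<omega>. \<Sum>i<n. X i \<omega>))"
      by (rule rv_cdf_continuous_at_right[OF sum_X])
    show "continuous (at_right t) (rv_cdf M (\<lambda>\<omega>. \<Sum>i<n. Y i \<omega>))"
      using Y_measurable by (intro rv_cdf_continuous_at_right borel_measurable_sum) auto
    show "mono (rv_cdf M (\<lambda>\<omega>. \<Sum>i<n. X i \<omega>))"
      using sum_X unfolding rv_cdf_def by (intro monoI finite_measure_mono) auto
    then show "mono (rv_cdf M (\<lambda>\<omega>. \<Sum>i<n. X i \<omega>))" for k::nat .
    show "(\<lambda>k. cell_cdf n L (cell_prob (diag k) L) (\<lambda>b. \<Sum>i<n. cell_value L i b) x)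
        \<longlonglongrightarrow> cell_cdf n L (lim_prob L) (\<lambda>b. \<Sum>i<n. cell_value L i b) x" for L x
      unfolding cell_cdf_def by (rule cell_mass_diag_LIMSEQ)
    show "(\<lambda>L. cell_cdf n L (lim_prob L) (\<lambda>b. \<Sum>i<n. cell_value L i b) x)
        \<longlonglongrightarrow> rv_cdf M (\<lambda>\<omega>. \<Sum>i<n. Y i \<omega>) x" for x
      using Y_approx_mono(1) Y_approx_LIMSEQ unfolding Y_approx_def
      by (intro tendsto_cell_cdf_lim_prob[OF lim_prob_None_LIMSEQ] sum_mono tendsto_sum) auto
  qed (rule countable_empty tendsto_const cell_prob_diag_LIMSEQ lim_prob_None_LIMSEQ
      LIMSEQ_divide_power_2 rv_cdf_sum_X_le_cell_cdf cell_cdf_le_rv_cdf_sum_X)+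
qed

lemma exists_Y: "\<exists>Y. (\<forall>i<n. Y i \<in> borel_measurable M \<and> rv_cdf M (Y i) = G i) \<and>
    rv_cdf M (\<lambda>\<omega>. \<Sum>i<n. Y i \<omega>) = rv_cdf M (\<lambda>\<omega>. \<Sum>i<n. X i \<omega>)"
  using Y_measurable rv_cdf_Y rv_cdf_sum_Y by blast

end

section \<open>Permutation mixtures and the main result\<close>

lemma in_A_permutation_mixture:
  assumes "in_A n F H"
  shows "\<exists>\<beta> x. (\<forall>p. 0 \<le> \<beta> p) \<and> (\<Sum>p\<in>{p. p permutes {..<n}}. \<beta> p) = 1 \<and> (\<Sum>i<n. x i) = 0 \<and>
    (\<forall>i<n. H i = (\<lambda>t. \<Sum>p\<in>{p. p permutes {..<n}}. \<beta> p * F (p i) (t - x (p i))))"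
proof -
  obtain L x where L: "doubly_stochastic n L" and x: "(\<Sum>i<n. x i) = 0"
    and H: "\<forall>i<n. H i = (\<lambda>t. \<Sum>j<n. L i j * shift_cdf (x j) (F j) t)"
    using assms unfolding in_A_def by blast
  obtain \<beta> where "\<And>p. 0 \<le> \<beta> p" "(\<Sum>p\<in>{p. p permutes {..<n}}. \<beta> p) = 1"
    "\<And>i g. i < n \<Longrightarrow> (\<Sum>j<n. L i j * g j) = (\<Sum>p\<in>{p. p permutes {..<n}}. \<beta> p * g (p i))"
    using doubly_stochastic_permutation_mixture[OF L] by blast
  with x H show ?thesis by (intro exI[of _ \<beta>] exI[of _ x]) (auto simp: shift_cdf_def)
qed

definition permutation_mixture ::
    "nat \<Rightarrow> (nat \<Rightarrow> real \<Rightarrow> real) \<Rightarrow> 'j set \<Rightarrow> ('j \<Rightarrow> real) \<Rightarrow> ('j \<Rightarrow> nat \<Rightarrow> nat) \<Rightarrow>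
      ('j \<Rightarrow> nat \<Rightarrow> real) \<Rightarrow> (nat \<Rightarrow> real \<Rightarrow> real) \<Rightarrow> bool" where
  "permutation_mixture n F J w \<pi> c S \<longleftrightarrow> (\<forall>j\<in>J. 0 \<le> w j) \<and> (\<Sum>j\<in>J. w j) = 1 \<and>
     (\<forall>j\<in>J. \<pi> j permutes {..<n} \<and> (\<Sum>i<n. c j i) = 0) \<and>
     (\<forall>i<n. S i = (\<lambda>t. \<Sum>j\<in>J. w j * F (\<pi> j i) (t - c j i)))"

text \<open>The index (l, p) pairs a component l of the convex combination with a permutation p of its
  Birkhoff decomposition.\<close>

lemma in_conv_A_permutation_mixture:
  assumes "in_conv_A n F S"
  shows "\<exists>(J :: (nat \<times> (nat \<Rightarrow> nat)) set) w \<pi> c. permutation_mixture n F J w \<pi> c S"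
proof -
  let ?P = "{p. p permutes {..<n}}"
  obtain m :: nat and v H where v: "\<forall>l<m. 0 \<le> v l \<and> in_A n F (H l)" "(\<Sum>l<m. v l) = 1"
    and S: "\<forall>i<n. S i = (\<lambda>t. \<Sum>l<m. v l * H l i t)"
    using assms unfolding in_conv_A_def by blast
  have "\<forall>l. \<exists>\<beta> x. l < m \<longrightarrow> (\<forall>p. 0 \<le> \<beta> p) \<and> (\<Sum>p\<in>?P. \<beta> p) = 1 \<and> (\<Sum>i<n. x i) = 0 \<and>
      (\<forall>i<n. H l i = (\<lambda>t. \<Sum>p\<in>?P. \<beta> p * F (p i) (t - x (p i))))"
    using in_A_permutation_mixture v(1) by blast
  then obtain \<beta> x where "\<forall>l. l < m \<longrightarrow> (\<forall>p. 0 \<le> \<beta> l p) \<and> (\<Sum>p\<in>?P. \<beta> l p) = 1 \<and>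
      (\<Sum>i<n. x l i) = 0 \<and> (\<forall>i<n. H l i = (\<lambda>t. \<Sum>p\<in>?P. \<beta> l p * F (p i) (t - x l (p i))))"
    by (simp only: choice_iff) blast
  then have \<beta>: "\<And>l p. l < m \<Longrightarrow> 0 \<le> \<beta> l p" "\<And>l. l < m \<Longrightarrow> (\<Sum>p\<in>?P. \<beta> l p) = 1"
    and x: "\<And>l. l < m \<Longrightarrow> (\<Sum>i<n. x l i) = 0"
    and H: "\<And>l i. l < m \<Longrightarrow> i < n \<Longrightarrow> H l i = (\<lambda>t. \<Sum>p\<in>?P. \<beta> l p * F (p i) (t - x l (p i)))"
    by blast+
  define w where "w = (\<lambda>(l, p). v l * \<beta> l p)"
  define c where "c = (\<lambda>(l, p :: nat \<Rightarrow> nat) i :: nat. x l (p i))"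
  have "(\<Sum>j\<in>{..<m} \<times> ?P. w j) = 1"
    using \<beta>(2) v(2)
      by (simp add: w_def sum.cartesian_product[symmetric] sum_distrib_left[symmetric])
  moreover have "(\<Sum>i<n. c j i) = 0" if "j \<in> {..<m} \<times> ?P" for j
    using that x sum.permute[of "snd j" "{..<n}" "x (fst j)"] by (auto simp: c_def comp_def)
  moreover have "S i = (\<lambda>t. \<Sum>j\<in>{..<m} \<times> ?P. w j * F (snd j i) (t - c j i))" if "i < n" for i
  proof
    fix t
    have "S i t = (\<Sum>l<m. \<Sum>p\<in>?P. v l * \<beta> l p * F (p i) (t - x l (p i)))"
      using S H that by (simp add: sum_distrib_left mult.assoc)
    also have "\<dots> = (\<Sum>j\<in>{..<m} \<times> ?P. w j * F (snd j i) (t - c j i))"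
      by (simp add: w_def c_def sum.cartesian_product case_prod_unfold)
    finally show "S i t = (\<Sum>j\<in>{..<m} \<times> ?P. w j * F (snd j i) (t - c j i))" .
  qed
  moreover have "\<forall>j\<in>{..<m} \<times> ?P. 0 \<le> w j" using v(1) \<beta>(1) by (auto simp: w_def)
  ultimately show ?thesis unfolding permutation_mixture_def
    by (intro exI[of _ "{..<m} \<times> ?P"] exI[of _ w] exI[of _ snd] exI[of _ c]) auto
qed

lemma mixture_limit_of_in_closure_A:
  assumes "prob_space M" and "atomless M" and F: "\<forall>i<n. is_cdf (F i)" and "in_closure_A n F G"
    and X: "\<forall>i<n. X i \<in> borel_measurable M \<and> rv_cdf M (X i) = F i"
  shows "\<exists>(J :: nat \<Rightarrow> (nat \<times> (nat \<Rightarrow> nat)) set) w \<pi> c. mixture_limit M n F G X J w \<pi> c"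
proof -
  obtain S where G: "\<forall>i<n. is_cdf (G i)"
    and S: "\<forall>k. in_conv_A n F (S k)" "\<forall>i<n. weak_conv (\<lambda>k. S k i) (G i)"
    using assms(4) unfolding in_closure_A_def by auto
  have "\<forall>k. \<exists>(J :: (nat \<times> (nat \<Rightarrow> nat)) set) w \<pi> c. permutation_mixture n F J w \<pi> c (S k)"
    using S(1) in_conv_A_permutation_mixture by blast
  then obtain J :: "nat \<Rightarrow> (nat \<times> (nat \<Rightarrow> nat)) set" and w \<pi> c
    where mixture: "\<forall>k. permutation_mixture n F (J k) (w k) (\<pi> k) (c k) (S k)"
    by (simp only: choice_iff) blast
  have S_eq: "(\<lambda>k. S k i) = (\<lambda>k t. \<Sum>j\<in>J k. w k j * F (\<pi> k j i) (t - c k j i))" if "i < n" for i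
    using mixture that unfolding permutation_mixture_def by blast
  have weak_conv: "weak_conv (\<lambda>k t. \<Sum>j\<in>J k. w k j * F (\<pi> k j i) (t - c k j i)) (G i)"
    if "i < n" for i
    using S(2) that unfolding S_eq[OF that, symmetric] by blast
  have "mixture_limit M n F G X J w \<pi> c"
  proof (intro mixture_limit.intro mixture_limit_axioms.intro)
    show "prob_space M" "atomless M" by (fact assms(1,2))+
  next
    fix i assume "i < n"
    then show "is_cdf (F i)" "is_cdf (G i)" "X i \<in> borel_measurable M" "rv_cdf M (X i) = F i"
      "weak_conv (\<lambda>k t. \<Sum>j\<in>J k. w k j * F (\<pi> k j i) (t - c k j i)) (G i)"
      using F G X weak_conv by blast+
  next
    fix k
    show "(\<Sum>j\<in>J k. w k j) = 1"
      using mixture unfolding permutation_mixture_def by blast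
  next
    fix k j assume "j \<in> J k"
    then show "0 \<le> w k j" "\<pi> k j permutes {..<n}" "(\<Sum>i<n. c k j i) = 0"
      using mixture unfolding permutation_mixture_def by blast+
  qed
  then show ?thesis by blast
qed

theorem proposition19:
  fixes M :: "'a measure" and n :: nat and F G :: "nat \<Rightarrow> real \<Rightarrow> real"
  assumes "prob_space M" and "atomless M"
    and "\<forall>i<n. is_cdf (F i)"
    and "in_closure_A n F G"
  shows "D_set M n F \<subseteq> D_set M n G"
proof
  fix H assume "H \<in> D_set M n F"
  then obtain X :: "nat \<Rightarrow> 'a \<Rightarrow> real"
    where X: "\<forall>i<n. X i \<in> borel_measurable M \<and> rv_cdf M (X i) = F i"
    and H: "H = rv_cdf M (\<lambda>\<omega>. \<Sum>i<n. X i \<omega>)"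
    unfolding D_set_def by auto
  obtain J :: "nat \<Rightarrow> (nat \<times> (nat \<Rightarrow> nat)) set" and w \<pi> c
    where "mixture_limit M n F G X J w \<pi> c"
    using mixture_limit_of_in_closure_A[OF assms X] by blast
  then interpret mixture_limit M n F G X J w \<pi> c .
  obtain Y where "\<forall>i<n. Y i \<in> borel_measurable M \<and> rv_cdf M (Y i) = G i"
    and "rv_cdf M (\<lambda>\<omega>. \<Sum>i<n. Y i \<omega>) = H"
    using exists_Y H by blast
  then show "H \<in> D_set M n G" unfolding D_set_def by auto
qed

end
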